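(* Let $(H,R)$ be a finite dimensional quasitriangular Hopf algebra and equip $H^*$ with the coquasitriangular structure $\sigma(p,q)=p(R^1)q(R^2)$. Let $H^*_l=\{l_q=\sigma(-,q)\mid q\in H^*\}$ and $H^*_r=\{r_p=\sigma(p,-)\mid p\in H^*\}$, sub-Hopf algebras of $H^{**}$, and let $D(H^*_r,H^*_l)$ be the generalized quantum double with respect to the skew pairing $r_p\otimes l_q\mapsto\sigma(p,q)$. Then $$D(H^*_r,H^*_l)\cong D(H^*_l)\cong D((H^*_r)^{\rm op})^{\rm op}$$ as Hopf algebras.
   Context: $R=R^1\otimes R^2\in H\otimes H$ (summation understood) is the $R$-matrix. $H^{**}$ has the Hopf structure dual to $H^*$; $l_{qq'}=l_{q'}l_q$, $\Delta(l_q)=l_{q_1}\otimes l_{q_2}$, $r_{pp'}=r_pr_{p'}$, $\Delta(r_p)=r_{p_2}\otimes r_{p_1}$. For a skew pairing $\wp$ on $\mathfrak B\otimes\mathfrak H$ ($\wp(bb',h)=\wp(b,h_1)\wp(b',h_2)$, $\wp(b,hh')=\wp(b_2,h)\wp(b_1,h')$, unital), $D(\mathfrak B,\mathfrak H)$ is the Hopf algebra on $\mathfrak B\otimes\mathfrak H$ with tensor product coalgebra, unit $1\otimes1$ and multiplication $(b\otimes h)(b'\otimes h')=\wp(b'_1,h_1)\wp^{-1}(b'_3,h_3)bb'_2\otimes h_2h'$. For a finite dimensional Hopf algebra $K$, the Drinfeld double is $D(K)=D(K^{*\rm cop},K)$ with respect to evaluation, i.e. multiplication $(f\otimes x)(g\otimes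 y)=g_3(x_1)g_1(S^{-1}(x_3))fg_2\otimes x_2y$ and comultiplication $\Delta(f\otimes x)=(f_2\otimes x_1)\otimes(f_1\otimes x_2)$. *)

theory Defs
  imports Main
begin

text \<open>Finite dimensional Hopf algebras over a field 'k, given in coordinates with respect to
a basis indexed by a finite type 'i (structure constants).
  hmul a b c : coefficient of e_c in e_a e_b
  hone a     : coefficient of e_a in 1
  hcom a x y : coefficient of e_x (x) e_y in Delta(e_a)
  hcou a     : counit of e_a
  hant a b   : coefficient of e_b in S(e_a)\<close>

record ('i, 'k) hopf =
  hmul :: "'i \<Rightarrow> 'i \<Rightarrow> 'i \<Rightarrow> 'k"
  hone :: "'i \<Rightarrow> 'k"
  hcom :: "'i \<Rightarrow> 'i \<Rightarrow> 'i \<Rightarrow> 'k"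
  hcou :: "'i \<Rightarrow> 'k"
  hant :: "'i \<Rightarrow> 'i \<Rightarrow> 'k"

definition kd :: "'i \<Rightarrow> 'i \<Rightarrow> 'k::field" where
  "kd a b = (if a = b then 1 else 0)"

definition hopf_alg :: "('i::finite, 'k::field) hopf \<Rightarrow> bool" where
  "hopf_alg H \<longleftrightarrow>
    (\<forall>a b c d. (\<Sum>e\<in>UNIV. hmul H a b e * hmul H e c d) = (\<Sum>e\<in>UNIV. hmul H b c e * hmul H a e d)) \<and>
    (\<forall>a c. (\<Sum>e\<in>UNIV. hone H e * hmul H e a c) = kd a c \<and> (\<Sum>e\<in>UNIV. hone H e * hmul H a e c) = kd a c) \<and>
    (\<forall>a x y z. (\<Sum>e\<in>UNIV. hcom H a e z * hcom H e x y) = (\<Sum>e\<in>UNIV. hcom H a x e * hcom H e y z)) \<and>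
    (\<forall>a b. (\<Sum>e\<in>UNIV. hcom H a e b * hcou H e) = kd a b \<and> (\<Sum>e\<in>UNIV. hcom H a b e * hcou H e) = kd a b) \<and>
    (\<forall>a b x y. (\<Sum>c\<in>UNIV. hmul H a b c * hcom H c x y) =
        (\<Sum>a1\<in>UNIV. \<Sum>a2\<in>UNIV. \<Sum>b1\<in>UNIV. \<Sum>b2\<in>UNIV.
           hcom H a a1 a2 * hcom H b b1 b2 * hmul H a1 b1 x * hmul H a2 b2 y)) \<and>
    (\<forall>x y. (\<Sum>c\<in>UNIV. hone H c * hcom H c x y) = hone H x * hone H y) \<and>
    (\<forall>a b. (\<Sum>c\<in>UNIV. hmul H a b c * hcou H c) = hcou H a * hcou H b) \<and>
    (\<Sum>c\<in>UNIV. hone H c * hcou H c) = 1 \<and>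
    (\<forall>a c. (\<Sum>x\<in>UNIV. \<Sum>y\<in>UNIV. hcom H a x y * (\<Sum>z\<in>UNIV. hant H x z * hmul H z y c)) = hcou H a * hone H c) \<and>
    (\<forall>a c. (\<Sum>x\<in>UNIV. \<Sum>y\<in>UNIV. hcom H a x y * (\<Sum>z\<in>UNIV. hant H y z * hmul H x z c)) = hcou H a * hone H c)"

definition antinv :: "('i::finite, 'k::field) hopf \<Rightarrow> 'i \<Rightarrow> 'i \<Rightarrow> 'k" where
  "antinv H = (THE T. \<forall>a c. (\<Sum>b\<in>UNIV. hant H a b * T b c) = kd a c \<and> (\<Sum>b\<in>UNIV. T a b * hant H b c) = kd a c)"

definition hdual :: "('i, 'k) hopf \<Rightarrow> ('i, 'k) hopf" where
  "hdual H = \<lparr>hmul = (\<lambda>x y a. hcom H a x y), hone = hcou H,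
              hcom = (\<lambda>a x y. hmul H x y a), hcou = hone H, hant = (\<lambda>a b. hant H b a)\<rparr>"

definition hop :: "('i::finite, 'k::field) hopf \<Rightarrow> ('i, 'k) hopf" where
  "hop H = \<lparr>hmul = (\<lambda>a b c. hmul H b a c), hone = hone H, hcom = hcom H, hcou = hcou H,
            hant = antinv H\<rparr>"

definition hcop :: "('i::finite, 'k::field) hopf \<Rightarrow> ('i, 'k) hopf" where
  "hcop H = \<lparr>hmul = hmul H, hone = hone H, hcom = (\<lambda>a x y. hcom H a y x), hcou = hcou H,
             hant = antinv H\<rparr>"

text \<open>Quasitriangular structure R = sum R a b e_a (x) e_b.\<close>
definition quasitriangular :: "('i::finite, 'k::field) hopf \<Rightarrow> ('i \<Rightarrow> 'i \<Rightarrow> 'k) \<Rightarrow> bool" where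
  "quasitriangular H R \<longleftrightarrow>
    (\<exists>R'. \<forall>x y.
       (\<Sum>a\<in>UNIV. \<Sum>b\<in>UNIV. \<Sum>a'\<in>UNIV. \<Sum>b'\<in>UNIV. R a b * R' a' b' * hmul H a a' x * hmul H b b' y)
          = hone H x * hone H y \<and>
       (\<Sum>a\<in>UNIV. \<Sum>b\<in>UNIV. \<Sum>a'\<in>UNIV. \<Sum>b'\<in>UNIV. R' a b * R a' b' * hmul H a a' x * hmul H b b' y)
          = hone H x * hone H y) \<and>
    (\<forall>c x y.
       (\<Sum>a\<in>UNIV. \<Sum>b\<in>UNIV. \<Sum>a'\<in>UNIV. \<Sum>b'\<in>UNIV. hcom H c b a * R a' b' * hmul H a a' x * hmul H b b' y)
     = (\<Sum>a\<in>UNIV. \<Sum>b\<in>UNIV. \<Sum>a'\<in>UNIV. \<Sum>b'\<in>UNIV. R a b * hcom H c a' b' * hmul H a a' x * hmul H b b' y)) \<and>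
    (\<forall>x y z. (\<Sum>a\<in>UNIV. R a z * hcom H a x y) = (\<Sum>b\<in>UNIV. \<Sum>d\<in>UNIV. R x b * R y d * hmul H b d z)) \<and>
    (\<forall>x y z. (\<Sum>a\<in>UNIV. R x a * hcom H a y z) = (\<Sum>a\<in>UNIV. \<Sum>c\<in>UNIV. R a z * R c y * hmul H a c x))"

text \<open>Elements p of H^* are given by their values p a = p(e_a).
  sigma(p,q) = p(R^1) q(R^2).  Elements of H^** are given by their values on the dual basis e^i.\<close>
definition sigma :: "('i::finite \<Rightarrow> 'i \<Rightarrow> 'k::field) \<Rightarrow> ('i \<Rightarrow> 'k) \<Rightarrow> ('i \<Rightarrow> 'k) \<Rightarrow> 'k" where
  "sigma R p q = (\<Sum>a\<in>UNIV. \<Sum>b\<in>UNIV. R a b * p a * q b)"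

definition lvec :: "('i::finite \<Rightarrow> 'i \<Rightarrow> 'k::field) \<Rightarrow> ('i \<Rightarrow> 'k) \<Rightarrow> 'i \<Rightarrow> 'k" where
  "lvec R q = (\<lambda>i. sigma R (\<lambda>a. kd i a) q)"

definition rvec :: "('i::finite \<Rightarrow> 'i \<Rightarrow> 'k::field) \<Rightarrow> ('i \<Rightarrow> 'k) \<Rightarrow> 'i \<Rightarrow> 'k" where
  "rvec R p = (\<lambda>j. sigma R p (\<lambda>b. kd j b))"

text \<open>Linear map given by the images phi a of the basis vectors.\<close>
definition linext :: "('a::finite \<Rightarrow> 'b \<Rightarrow> 'k::field) \<Rightarrow> ('a \<Rightarrow> 'k) \<Rightarrow> 'b \<Rightarrow> 'k" where
  "linext \<phi> c = (\<lambda>z. \<Sum>a\<in>UNIV. c a * \<phi> a z)"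

definition lin_inj :: "('a::finite \<Rightarrow> 'b \<Rightarrow> 'k::field) \<Rightarrow> bool" where
  "lin_inj \<phi> \<longleftrightarrow> (\<forall>c. linext \<phi> c = (\<lambda>_. 0) \<longrightarrow> c = (\<lambda>_. 0))"

text \<open>Bialgebra morphism (for Hopf algebras this is a Hopf algebra morphism).\<close>
definition hopf_hom :: "('a::finite, 'k::field) hopf \<Rightarrow> ('b::finite, 'k) hopf \<Rightarrow> ('a \<Rightarrow> 'b \<Rightarrow> 'k) \<Rightarrow> bool" where
  "hopf_hom A B \<phi> \<longleftrightarrow>
    (\<forall>a b z. (\<Sum>c\<in>UNIV. hmul A a b c * \<phi> c z) = (\<Sum>x\<in>UNIV. \<Sum>y\<in>UNIV. \<phi> a x * \<phi> b y * hmul B x y z)) \<and>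
    (\<forall>z. (\<Sum>a\<in>UNIV. hone A a * \<phi> a z) = hone B z) \<and>
    (\<forall>a x y. (\<Sum>z\<in>UNIV. \<phi> a z * hcom B z x y) = (\<Sum>c\<in>UNIV. \<Sum>d\<in>UNIV. hcom A a c d * \<phi> c x * \<phi> d y)) \<and>
    (\<forall>a. (\<Sum>z\<in>UNIV. \<phi> a z * hcou B z) = hcou A a)"

definition hopf_iso :: "('a::finite, 'k::field) hopf \<Rightarrow> ('b::finite, 'k) hopf \<Rightarrow> bool" where
  "hopf_iso A B \<longleftrightarrow> (\<exists>\<phi> \<psi>. hopf_hom A B \<phi> \<and>
      (\<forall>a a'. (\<Sum>z\<in>UNIV. \<phi> a z * \<psi> z a') = kd a a') \<and>
      (\<forall>z z'. (\<Sum>a\<in>UNIV. \<psi> z a * \<phi> a z') = kd z z'))"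

definition pconv :: "('b::finite, 'k::field) hopf \<Rightarrow> ('l::finite, 'k) hopf \<Rightarrow>
     ('b \<Rightarrow> 'l \<Rightarrow> 'k) \<Rightarrow> ('b \<Rightarrow> 'l \<Rightarrow> 'k) \<Rightarrow> 'b \<Rightarrow> 'l \<Rightarrow> 'k" where
  "pconv B L f g = (\<lambda>b h. \<Sum>b1\<in>UNIV. \<Sum>b2\<in>UNIV. \<Sum>h1\<in>UNIV. \<Sum>h2\<in>UNIV.
        hcom B b b1 b2 * hcom L h h1 h2 * f b1 h1 * g b2 h2)"

definition pinv :: "('b::finite, 'k::field) hopf \<Rightarrow> ('l::finite, 'k) hopf \<Rightarrow>
     ('b \<Rightarrow> 'l \<Rightarrow> 'k) \<Rightarrow> 'b \<Rightarrow> 'l \<Rightarrow> 'k" where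
  "pinv B L P = (THE Q. pconv B L Q P = (\<lambda>b h. hcou B b * hcou L h) \<and>
                         pconv B L P Q = (\<lambda>b h. hcou B b * hcou L h))"

definition com2 :: "('i::finite, 'k::field) hopf \<Rightarrow> 'i \<Rightarrow> 'i \<Rightarrow> 'i \<Rightarrow> 'i \<Rightarrow> 'k" where
  "com2 H a x y z = (\<Sum>e\<in>UNIV. hcom H a e z * hcom H e x y)"

definition gd_mul :: "('b::finite, 'k::field) hopf \<Rightarrow> ('l::finite, 'k) hopf \<Rightarrow> ('b \<Rightarrow> 'l \<Rightarrow> 'k) \<Rightarrow>
     'b \<times> 'l \<Rightarrow> 'b \<times> 'l \<Rightarrow> 'b \<times> 'l \<Rightarrow> 'k" where
  "gd_mul B L P = (\<lambda>(b, h) (b', h') (c, d).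
     \<Sum>x1\<in>UNIV. \<Sum>x2\<in>UNIV. \<Sum>x3\<in>UNIV. \<Sum>y1\<in>UNIV. \<Sum>y2\<in>UNIV. \<Sum>y3\<in>UNIV.
       com2 B b' x1 x2 x3 * com2 L h y1 y2 y3 * P x1 y1 * pinv B L P x3 y3
       * hmul B b x2 c * hmul L y2 h' d)"

definition gen_double :: "('b::finite, 'k::field) hopf \<Rightarrow> ('l::finite, 'k) hopf \<Rightarrow> ('b \<Rightarrow> 'l \<Rightarrow> 'k) \<Rightarrow>
     ('b \<times> 'l, 'k) hopf" where
  "gen_double B L P = \<lparr>
     hmul = gd_mul B L P,
     hone = (\<lambda>(b, h). hone B b * hone L h),
     hcom = (\<lambda>(b, h) (b1, h1) (b2, h2). hcom B b b1 b2 * hcom L h h1 h2),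
     hcou = (\<lambda>(b, h). hcou B b * hcou L h),
     hant = (\<lambda>(b, h) (c, d). \<Sum>h'\<in>UNIV. \<Sum>b'\<in>UNIV. \<Sum>x\<in>UNIV. \<Sum>y\<in>UNIV.
               hant L h h' * hant B b b' * hone B x * hone L y * gd_mul B L P (x, h') (b', y) (c, d))\<rparr>"

text \<open>Drinfeld double D(K) = D(K^{* cop}, K) with respect to evaluation.\<close>
definition drinfeld :: "('i::finite, 'k::field) hopf \<Rightarrow> ('i \<times> 'i, 'k) hopf" where
  "drinfeld K = gen_double (hcop (hdual K)) K kd"

end

theory Submission
  imports Defs HOL.Vector_Spaces "HOL-Library.Function_Algebras"
begin

text \<open>Quasitriangularity makes \<open>p \<mapsto> r\<^sub>p\<close> and \<open>q \<mapsto> l\<^sub>q\<close> (anti)multiplicative, so \<open>P\<close>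
inherits the skew pairing identities of \<open>\<sigma>\<close> and \<open>b \<mapsto> P(b,-)\<close> is a bialgebra map
\<open>H\<^sup>*\<^sub>r \<rightarrow> (H\<^sup>*\<^sub>l)\<^bsup>*cop\<^esup>\<close>, and since \<open>\<sigma>\<close> is nondegenerate on
\<open>H\<^sup>*\<^sub>r \<times> H\<^sup>*\<^sub>l\<close> its matrix is invertible.  A generalised double \<open>D(B,L,P')\<close> is
functorial in pairs of bialgebra maps along which a pairing pulls back to \<open>P'\<close>; the
convolution inverse of the pairing, which enters the multiplication, is carried along by
uniqueness.  Applied to \<open>P \<otimes> id\<close> this gives \<open>D(H\<^sup>*\<^sub>r,H\<^sup>*\<^sub>l) \<cong> D(H\<^sup>*\<^sub>l)\<close>.  For the
second isomorphism, the transpose of \<open>P\<close> and the inverse of \<open>P\<close> are anti-algebra coalgebra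
maps \<open>H\<^sup>*\<^sub>l \<rightarrow> ((H\<^sup>*\<^sub>r)\<^bsup>op\<^esup>)\<^bsup>*cop\<^esup>\<close> and \<open>(H\<^sup>*\<^sub>l)\<^bsup>*cop\<^esup> \<rightarrow> (H\<^sup>*\<^sub>r)\<^bsup>op\<^esup>\<close>, and
interchanging the tensor factors turns this pair into an anti-isomorphism
\<open>D(H\<^sup>*\<^sub>l) \<rightarrow> D((H\<^sup>*\<^sub>r)\<^bsup>op\<^esup>)\<close>.  Only the convolution inverse of \<open>P\<close> is given
directly, through the antipode of \<open>H\<^sup>*\<^sub>r\<close>; the evaluation pairings of both Drinfeld
doubles obtain theirs as pullbacks of it.\<close>

section \<open>Matrices over a field\<close>

lemma kd_commute: "kd a b = kd b a"
  by (simp add: kd_def eq_commute)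

lemma sum_kd_left [simp]: "(\<Sum>x\<in>UNIV. kd a x * f x) = (f (a::'a::finite) :: 'k::field)"
  by (simp add: kd_def if_distrib[of "\<lambda>u. u * _"] cong: if_cong)

lemma sum_kd_left' [simp]: "(\<Sum>x\<in>UNIV. kd x a * f x) = (f (a::'a::finite) :: 'k::field)"
  by (simp add: kd_def if_distrib[of "\<lambda>u. u * _"] cong: if_cong)

lemma sum_kd_right [simp]: "(\<Sum>x\<in>UNIV. f x * kd x a) = (f (a::'a::finite) :: 'k::field)"
  by (simp add: kd_def if_distrib[of "\<lambda>u. _ * u"] cong: if_cong)

lemma kd_pair: "kd (a, b) (c, d) = kd a c * kd b d"
  by (simp add: kd_def)

lemma kd_mult_left: "kd a b * y = (if a = b then y else (0::'k::field))"
  and kd_mult_right: "y * kd a b = (if a = b then y else (0::'k::field))"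
  and if_zero_mult_left: "(if P then x else 0) * y = (if P then x * y else (0::'k::field))"
  and if_zero_mult_right: "y * (if P then x else 0) = (if P then y * x else (0::'k::field))"
  by (simp_all add: kd_def)

lemmas kd_simps = kd_mult_left kd_mult_right if_zero_mult_left if_zero_mult_right

lemma sum_UNIV_prod:
  "(\<Sum>c\<in>UNIV. F c) = (\<Sum>a\<in>UNIV. \<Sum>b\<in>UNIV. F (a, b))"
  for F :: "'a::finite \<times> 'b::finite \<Rightarrow> 'k::comm_monoid_add"
  by (simp add: sum.cartesian_product)

text \<open>A matrix \<open>\<phi> :: 'a \<Rightarrow> 'b \<Rightarrow> 'k\<close> stands for the linear map sending \<open>e\<^sub>a\<close> to
\<open>\<Sum>\<^sub>z \<phi> a z e\<^sub>z\<close>, as in \<^const>\<open>hopf_hom\<close>; hence \<open>mat_mult \<phi> \<psi>\<close> represents \<open>\<psi> \<circ> \<phi>\<close>.\<close>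

definition mat_mult :: "('a::finite \<Rightarrow> 'b::finite \<Rightarrow> 'k::field) \<Rightarrow> ('b \<Rightarrow> 'c \<Rightarrow> 'k) \<Rightarrow> 'a \<Rightarrow> 'c \<Rightarrow> 'k"
  where "mat_mult f g = (\<lambda>a c. \<Sum>b\<in>UNIV. f a b * g b c)"

definition mat_transpose :: "('a \<Rightarrow> 'b \<Rightarrow> 'k) \<Rightarrow> 'b \<Rightarrow> 'a \<Rightarrow> 'k"
  where "mat_transpose F = (\<lambda>x y. F y x)"

lemma mat_mult_kd_apply:
  "mat_mult f g = kd \<Longrightarrow> (\<Sum>b\<in>UNIV. f a b * g b c) = kd a c"
  unfolding mat_mult_def by (drule fun_cong[of _ _ a], drule fun_cong[of _ _ c]) simp

lemma mat_mult_kd_right [simp]: "mat_mult M kd = M"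
  by (simp_all add: mat_mult_def fun_eq_iff)

lemma mat_transpose_transpose [simp]: "mat_transpose (mat_transpose F) = F"
  by (simp add: mat_transpose_def)

lemma mat_transpose_kd [simp]: "mat_transpose kd = kd"
  by (simp add: mat_transpose_def fun_eq_iff kd_commute)

lemma mat_mult_transpose: "mat_mult (mat_transpose f) (mat_transpose g) = mat_transpose (mat_mult g f)"
  by (simp add: mat_mult_def mat_transpose_def fun_eq_iff mult.commute)

lemma mat_cancel_right:
  fixes F G :: "'a::finite \<Rightarrow> 'k::field"
  assumes inv: "mat_mult \<phi> \<psi> = kd"
    and eq: "\<And>w. (\<Sum>z\<in>UNIV. F z * \<phi> z w) = (\<Sum>z\<in>UNIV. G z * \<phi> z w)"
  shows "F z = G z"
proof -
  have F_eq: "F z' = (\<Sum>w\<in>UNIV. (\<Sum>z\<in>UNIV. F z * \<phi> z w) * \<psi> w z')" for F :: "'a \<Rightarrow> 'k" and z'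
proof -
    have "(\<Sum>w\<in>UNIV. (\<Sum>z\<in>UNIV. F z * \<phi> z w) * \<psi> w z') = (\<Sum>z\<in>UNIV. F z * (\<Sum>w\<in>UNIV. \<phi> z w * \<psi> w z'))"
      by (simp only: sum_distrib_left sum_distrib_right mult.assoc) (rule sum.swap)
    thus ?thesis by (simp add: mat_mult_kd_apply[OF inv])
  qed
  show ?thesis
    by (subst F_eq[of F], subst F_eq[of G], simp only: eq)
qed

lemma mat_cancel_left:
  fixes F G :: "'a::finite \<Rightarrow> 'k::field"
  assumes inv: "mat_mult \<psi> \<phi> = kd"
    and eq: "\<And>v. (\<Sum>a\<in>UNIV. \<phi> v a * F a) = (\<Sum>a\<in>UNIV. \<phi> v a * G a)"
  shows "F a = G a"
proof -
  have F_eq: "F a' = (\<Sum>v\<in>UNIV. \<psi> a' v * (\<Sum>a\<in>UNIV. \<phi> v a * F a))" for F :: "'a \<Rightarrow> 'k" and a'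
proof -
    have "(\<Sum>v\<in>UNIV. \<psi> a' v * (\<Sum>a\<in>UNIV. \<phi> v a * F a)) = (\<Sum>a\<in>UNIV. (\<Sum>v\<in>UNIV. \<psi> a' v * \<phi> v a) * F a)"
      by (simp only: sum_distrib_left sum_distrib_right mult.assoc) (rule sum.swap)
    thus ?thesis by (simp add: mat_mult_kd_apply[OF inv])
  qed
  show ?thesis
    by (subst F_eq[of F], subst F_eq[of G], simp only: eq)
qed

definition mat_tensor :: "('a \<Rightarrow> 'b \<Rightarrow> 'k::field) \<Rightarrow> ('c \<Rightarrow> 'd \<Rightarrow> 'k) \<Rightarrow> 'a \<times> 'c \<Rightarrow> 'b \<times> 'd \<Rightarrow> 'k"
  where "mat_tensor \<theta> \<psi> = (\<lambda>(b, h) (x, y). \<theta> b x * \<psi> h y)"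

definition mat_swap :: "('a \<Rightarrow> 'b \<Rightarrow> 'k::field) \<Rightarrow> ('c \<Rightarrow> 'd \<Rightarrow> 'k) \<Rightarrow> 'a \<times> 'c \<Rightarrow> 'd \<times> 'b \<Rightarrow> 'k"
  where "mat_swap \<theta> \<psi> = (\<lambda>(b, h) (x, y). \<psi> h x * \<theta> b y)"

lemma mat_mult_tensor:
  "mat_mult (mat_tensor a b) (mat_tensor c d) = mat_tensor (mat_mult a c) (mat_mult b d)"
  by (simp add: mat_mult_def mat_tensor_def fun_eq_iff sum_UNIV_prod sum_product split: prod.split)
    (simp add: mult_ac)

lemma mat_tensor_kd [simp]: "mat_tensor kd kd = kd"
  by (simp add: mat_tensor_def fun_eq_iff kd_pair)

lemma mat_mult_swap:
  "mat_mult (mat_swap \<theta> \<psi>) (mat_swap \<theta>' \<psi>') = mat_tensor (mat_mult \<theta> \<psi>') (mat_mult \<psi> \<theta>')"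
  by (simp add: mat_mult_def mat_swap_def mat_tensor_def fun_eq_iff sum_UNIV_prod sum_product split: prod.split)
    (subst sum.swap, simp add: mult_ac)

definition scale_fun :: "'k::field \<Rightarrow> ('n \<Rightarrow> 'k) \<Rightarrow> 'n \<Rightarrow> 'k"
  where "scale_fun c f = (\<lambda>x. c * f x)"

definition unit_funs :: "('n \<Rightarrow> 'k::field) set"
  where "unit_funs = range kd"

lemma vector_space_scale_fun: "vector_space (scale_fun :: 'k::field \<Rightarrow> ('n \<Rightarrow> 'k) \<Rightarrow> _)"
  by unfold_locales (auto simp: scale_fun_def fun_eq_iff algebra_simps)

lemma sum_fun_apply: "(\<Sum>v\<in>S. f v) x = (\<Sum>v\<in>S. f v x)"
  for f :: "'a \<Rightarrow> 'n \<Rightarrow> 'k::comm_monoid_add"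
  by (induction S rule: infinite_finite_induct) auto

lemma inj_kd: "inj (kd :: 'n \<Rightarrow> 'n \<Rightarrow> 'k::field)"
  by (auto simp: inj_def fun_eq_iff kd_def)

lemma card_unit_funs: "card (unit_funs :: ('n::finite \<Rightarrow> 'k::field) set) = card (UNIV :: 'n set)"
  unfolding unit_funs_def by (simp add: card_image[OF inj_kd])

lemma finite_dimensional_scale_fun:
  "finite_dimensional_vector_space (scale_fun :: 'k::field \<Rightarrow> ('n::finite \<Rightarrow> 'k) \<Rightarrow> _) unit_funs"
proof -
  interpret vector_space "scale_fun :: 'k \<Rightarrow> ('n \<Rightarrow> 'k) \<Rightarrow> _"
    by (rule vector_space_scale_fun)
  show ?thesis
  proof
    show "finite (unit_funs :: ('n \<Rightarrow> 'k) set)"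
      unfolding unit_funs_def by simp
    show "independent (unit_funs :: ('n \<Rightarrow> 'k) set)"
    proof (rule independent_if_scalars_zero)
      fix f :: "('n \<Rightarrow> 'k) \<Rightarrow> 'k" and v :: "'n \<Rightarrow> 'k"
      assume comb: "(\<Sum>u\<in>unit_funs. scale_fun (f u) u) = 0" and "v \<in> unit_funs"
      then obtain b where b: "v = kd b"
        unfolding unit_funs_def by auto
      have "(\<Sum>u\<in>(unit_funs::('n \<Rightarrow> 'k) set). scale_fun (f u) u) b = 0"
        using comb by simp
      hence "(\<Sum>y\<in>UNIV. f (kd y) * kd y b) = 0"
        unfolding unit_funs_def sum_fun_apply by (simp add: sum.reindex[OF inj_kd] scale_fun_def)
      thus "f v = 0"
        using b by simp
    qed (simp add: unit_funs_def)
    show "span (unit_funs :: ('n \<Rightarrow> 'k) set) = UNIV"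
    proof (auto simp: span_finite unit_funs_def)
      fix g :: "'n \<Rightarrow> 'k"
      have "g = (\<Sum>v\<in>range kd. scale_fun (\<Sum>x\<in>UNIV. v x * g x) v)"
        by (simp add: fun_eq_iff sum_fun_apply sum.reindex[OF inj_kd] scale_fun_def)
      thus "g \<in> range (\<lambda>u. \<Sum>v\<in>range kd. scale_fun (u v) v)"
        by (rule range_eqI[where x="\<lambda>v. \<Sum>x\<in>UNIV. v x * g x"])
    qed
  qed
qed

lemma linear_linext: "Vector_Spaces.linear scale_fun scale_fun (linext (M :: 'a::finite \<Rightarrow> 'b \<Rightarrow> 'k::field))"
  unfolding linear_iff
proof (intro conjI allI)
  show "linext M (x + y) = linext M x + linext M y" for x y
    by (simp add: linext_def fun_eq_iff sum.distrib distrib_right)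
  show "linext M (scale_fun c x) = scale_fun c (linext M x)" for c x
    by (simp add: linext_def fun_eq_iff scale_fun_def sum_distrib_left mult.assoc)
qed (rule vector_space_scale_fun)+

lemma linext_kd [simp]: "linext M (kd b) = M b"
  unfolding linext_def by (simp add: fun_eq_iff)

lemma lin_inj_imp_inj: "lin_inj M \<Longrightarrow> inj (linext M)"
proof (rule injI)
  fix x y assume inj: "lin_inj M" and "linext M x = linext M y"
  hence "linext M (\<lambda>b. x b - y b) = (\<lambda>_. 0)"
    by (auto simp: linext_def fun_eq_iff algebra_simps sum_subtractf)
  with inj have "(\<lambda>b. x b - y b) = (\<lambda>_. 0)"
    unfolding lin_inj_def by blast
  thus "x = y" by (auto simp: fun_eq_iff)
qed

lemma lin_inj_card_le:
  fixes M :: "'a::finite \<Rightarrow> 'b::finite \<Rightarrow> 'k::field"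
  assumes "lin_inj M"
  shows "card (UNIV :: 'a set) \<le> card (UNIV :: 'b set)"
proof -
  interpret fun_spaces: finite_dimensional_vector_space_pair
    "scale_fun :: 'k \<Rightarrow> ('a \<Rightarrow> 'k) \<Rightarrow> _" unit_funs "scale_fun :: 'k \<Rightarrow> ('b \<Rightarrow> 'k) \<Rightarrow> _" unit_funs
    by (simp add: finite_dimensional_vector_space_pair_def finite_dimensional_scale_fun)
  have "fun_spaces.vs2.dim (range (linext M)) = fun_spaces.vs1.dim (UNIV :: ('a \<Rightarrow> 'k) set)"
    using lin_inj_imp_inj[OF assms]
    by (intro fun_spaces.dim_image_eq[OF linear_linext]) (auto intro: inj_on_subset)
  moreover have "fun_spaces.vs2.dim (range (linext M)) \<le> fun_spaces.vs2.dim (UNIV :: ('b \<Rightarrow> 'k) set)"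
    by (rule fun_spaces.vs2.dim_subset) simp
  ultimately show ?thesis
    by (simp add: card_unit_funs)
qed

lemma mat_inverse_exists:
  fixes M :: "'a::finite \<Rightarrow> 'b::finite \<Rightarrow> 'k::field"
  assumes inj: "lin_inj M" and inj_transpose: "lin_inj (mat_transpose M)"
  shows "\<exists>N. mat_mult M N = kd \<and> mat_mult N M = kd"
proof -
  interpret fun_spaces: finite_dimensional_vector_space_pair
    "scale_fun :: 'k \<Rightarrow> ('a \<Rightarrow> 'k) \<Rightarrow> _" unit_funs "scale_fun :: 'k \<Rightarrow> ('b \<Rightarrow> 'k) \<Rightarrow> _" unit_funs
    by (simp add: finite_dimensional_vector_space_pair_def finite_dimensional_scale_fun)
  have "card (UNIV :: 'a set) = card (UNIV :: 'b set)"
    using lin_inj_card_le[OF inj] lin_inj_card_le[OF inj_transpose] by simp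
  hence "surj (linext M)"
    by (intro fun_spaces.linear_injective_imp_surjective[OF linear_linext lin_inj_imp_inj[OF inj]])
      (simp add: card_unit_funs)
  define N where "N h = inv (linext M) (kd h)" for h
  have "linext M (N h) = kd h" for h
    unfolding N_def by (rule surj_f_inv_f[OF \<open>surj (linext M)\<close>])
  hence left_inverse: "mat_mult N M = kd"
    by (simp add: mat_mult_def linext_def fun_eq_iff)
  have "(\<lambda>a'. \<Sum>h\<in>UNIV. M a h * N h a') = kd a" for a
  proof (rule injD[OF lin_inj_imp_inj[OF inj]], rule ext)
    fix h'
    have "(\<Sum>a'\<in>UNIV. (\<Sum>h\<in>UNIV. M a h * N h a') * M a' h') = (\<Sum>h\<in>UNIV. M a h * (\<Sum>a'\<in>UNIV. N h a' * M a' h'))"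
      by (simp only: sum_distrib_left sum_distrib_right mult.assoc) (rule sum.swap)
    thus "linext M (\<lambda>a'. \<Sum>h\<in>UNIV. M a h * N h a') h' = linext M (kd a) h'"
      by (simp add: linext_def mat_mult_kd_apply[OF left_inverse])
  qed
  hence "mat_mult M N = kd"
    by (simp add: mat_mult_def fun_eq_iff)
  with left_inverse show ?thesis by blast
qed

section \<open>Convolution of pairings\<close>

definition coalgebra :: "('i::finite, 'k::field) hopf \<Rightarrow> bool" where
  "coalgebra H \<longleftrightarrow>
    (\<forall>a x y z. (\<Sum>e\<in>UNIV. hcom H a e z * hcom H e x y) = (\<Sum>e\<in>UNIV. hcom H a x e * hcom H e y z)) \<and>
    (\<forall>a b. (\<Sum>e\<in>UNIV. hcom H a e b * hcou H e) = kd a b \<and> (\<Sum>e\<in>UNIV. hcom H a b e * hcou H e) = kd a b)"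

lemma hopf_alg_coalgebra: "hopf_alg H \<Longrightarrow> coalgebra H"
  unfolding hopf_alg_def coalgebra_def by blast

definition pair_counit :: "('b::finite, 'k::field) hopf \<Rightarrow> ('l::finite, 'k) hopf \<Rightarrow> 'b \<Rightarrow> 'l \<Rightarrow> 'k"
  where "pair_counit B L = (\<lambda>b h. hcou B b * hcou L h)"

definition conv_inverse :: "('b::finite, 'k::field) hopf \<Rightarrow> ('l::finite, 'k) hopf \<Rightarrow>
    ('b \<Rightarrow> 'l \<Rightarrow> 'k) \<Rightarrow> ('b \<Rightarrow> 'l \<Rightarrow> 'k) \<Rightarrow> bool"
  where "conv_inverse B L P Q \<longleftrightarrow> pconv B L Q P = pair_counit B L \<and> pconv B L P Q = pair_counit B L"

lemma pconv_assoc: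
  assumes "coalgebra B" and "coalgebra L"
  shows "pconv B L f (pconv B L g k) = pconv B L (pconv B L f g) k"
proof (intro ext)
  fix b h
  have coassoc_B: "\<And>a x y z. (\<Sum>e\<in>UNIV. hcom B a e z * hcom B e x y) = (\<Sum>e\<in>UNIV. hcom B a x e * hcom B e y z)"
    and coassoc_L: "\<And>a x y z. (\<Sum>e\<in>UNIV. hcom L a e z * hcom L e x y) = (\<Sum>e\<in>UNIV. hcom L a x e * hcom L e y z)"
    using assms unfolding coalgebra_def by blast+
  have "pconv B L f (pconv B L g k) b h =
    (\<Sum>b1\<in>UNIV. \<Sum>c1\<in>UNIV. \<Sum>c2\<in>UNIV. \<Sum>h1\<in>UNIV. \<Sum>d1\<in>UNIV. \<Sum>d2\<in>UNIV.
      (\<Sum>e\<in>UNIV. hcom B b b1 e * hcom B e c1 c2) * (\<Sum>e\<in>UNIV. hcom L h h1 e * hcom L e d1 d2) *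
      f b1 h1 * g c1 d1 * k c2 d2)"
    unfolding pconv_def
    apply (simp only: sum_distrib_left sum_distrib_right sum.cartesian_product UNIV_Times_UNIV)
    apply (rule sum.reindex_bij_witness[where j="\<lambda>(b1,b2,h1,h2,(c1,c2,d1,d2)). (b1,c1,c2,h1,d1,d2,(h2,b2))"
        and i="\<lambda>(b1,c1,c2,h1,d1,d2,(eL,eB)). (b1, eB, h1, eL, (c1,c2,d1,d2))"])
    by (auto simp: mult_ac)
  also have "\<dots> = (\<Sum>b1\<in>UNIV. \<Sum>c1\<in>UNIV. \<Sum>c2\<in>UNIV. \<Sum>h1\<in>UNIV. \<Sum>d1\<in>UNIV. \<Sum>d2\<in>UNIV.
      (\<Sum>e\<in>UNIV. hcom B b e c2 * hcom B e b1 c1) * (\<Sum>e\<in>UNIV. hcom L h e d2 * hcom L e h1 d1) *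
      f b1 h1 * g c1 d1 * k c2 d2)"
    by (simp only: coassoc_B coassoc_L)
  also have "\<dots> = pconv B L (pconv B L f g) k b h"
    unfolding pconv_def
    apply (simp only: sum_distrib_left sum_distrib_right sum.cartesian_product UNIV_Times_UNIV)
    apply (rule sum.reindex_bij_witness[where i="\<lambda>(B12,B3,H12,H3,(x1,x2,y1,y2)). (x1,x2,B3,y1,y2,H3,(H12,B12))"
        and j="\<lambda>(b1,c1,c2,h1,d1,d2,(eL,eB)). (eB,c2,eL,d2,(b1,c1,h1,d1))"])
    by (auto simp: mult_ac)
  finally show "pconv B L f (pconv B L g k) b h = pconv B L (pconv B L f g) k b h" .
qed

lemma pconv_counit_left:
  assumes "coalgebra B" and "coalgebra L"
  shows "pconv B L (pair_counit B L) f = f"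
proof (intro ext)
  fix b h
  have counit_B: "\<And>a b. (\<Sum>e\<in>UNIV. hcom B a e b * hcou B e) = kd a b"
    and counit_L: "\<And>a b. (\<Sum>e\<in>UNIV. hcom L a e b * hcou L e) = kd a b"
    using assms unfolding coalgebra_def by blast+
  have "pconv B L (pair_counit B L) f b h = (\<Sum>b2\<in>UNIV. \<Sum>h2\<in>UNIV.
      (\<Sum>e\<in>UNIV. hcom B b e b2 * hcou B e) * (\<Sum>e\<in>UNIV. hcom L h e h2 * hcou L e) * f b2 h2)"
    unfolding pconv_def pair_counit_def
    apply (simp only: sum_distrib_left sum_distrib_right sum.cartesian_product UNIV_Times_UNIV)
    apply (rule sum.reindex_bij_witness[where i="\<lambda>(b2,h2,(h1,b1)). (b1,b2,h1,h2)" and j="\<lambda>(b1,b2,h1,h2). (b2,h2,(h1,b1))"])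
    by (auto simp: mult_ac)
  also have "\<dots> = f b h"
    by (simp add: counit_B counit_L kd_simps)
  finally show "pconv B L (pair_counit B L) f b h = f b h" .
qed

lemma pconv_counit_right:
  assumes "coalgebra B" and "coalgebra L"
  shows "pconv B L f (pair_counit B L) = f"
proof (intro ext)
  fix b h
  have counit_B: "\<And>a b. (\<Sum>e\<in>UNIV. hcom B a b e * hcou B e) = kd a b"
    and counit_L: "\<And>a b. (\<Sum>e\<in>UNIV. hcom L a b e * hcou L e) = kd a b"
    using assms unfolding coalgebra_def by blast+
  have "pconv B L f (pair_counit B L) b h = (\<Sum>b2\<in>UNIV. \<Sum>h2\<in>UNIV.
      (\<Sum>e\<in>UNIV. hcom B b b2 e * hcou B e) * (\<Sum>e\<in>UNIV. hcom L h h2 e * hcou L e) * f b2 h2)"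
    unfolding pconv_def pair_counit_def
    apply (simp only: sum_distrib_left sum_distrib_right sum.cartesian_product UNIV_Times_UNIV)
    apply (rule sum.reindex_bij_witness[where i="\<lambda>(x,y,(n,na)). (x,na,y,n)" and j="\<lambda>(b1,b2,h1,h2). (b1,h1,(h2,b2))"])
    by (auto simp: mult_ac)
  also have "\<dots> = f b h"
    by (simp add: counit_B counit_L kd_simps)
  finally show "pconv B L f (pair_counit B L) b h = f b h" .
qed

lemma conv_inverse_unique:
  assumes "coalgebra B" and "coalgebra L"
    and "conv_inverse B L P Q1" and "conv_inverse B L P Q2"
  shows "Q1 = Q2"
proof -
  have "Q1 = pconv B L Q1 (pconv B L P Q2)"
    using pconv_counit_right[OF assms(1,2)] assms(4) unfolding conv_inverse_def by simp
  also have "\<dots> = pconv B L (pconv B L Q1 P) Q2"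
    using assms(1,2) by (rule pconv_assoc)
  also have "\<dots> = Q2"
    using pconv_counit_left[OF assms(1,2)] assms(3) unfolding conv_inverse_def by simp
  finally show ?thesis .
qed

lemma pinv_eqI:
  assumes "coalgebra B" and "coalgebra L" and "conv_inverse B L P Q"
  shows "pinv B L P = Q"
  unfolding pinv_def pair_counit_def[symmetric] conv_inverse_def[symmetric]
  using assms conv_inverse_unique by blast

lemma pconv_skew_pairing_antipode_right:
  assumes "hopf_alg B"
    and mult_pairing: "\<And>b b' h. (\<Sum>c\<in>UNIV. hmul B b b' c * P c h) = (\<Sum>h1\<in>UNIV. \<Sum>h2\<in>UNIV. hcom L h h1 h2 * P b h1 * P b' h2)"
    and unit_pairing: "\<And>h. (\<Sum>c\<in>UNIV. hone B c * P c h) = hcou L h"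
  shows "pconv B L P (\<lambda>b h. \<Sum>b'\<in>UNIV. hant B b b' * P b' h) = pair_counit B L"
proof (intro ext)
  fix b h
  have antipode_right: "\<And>a c. (\<Sum>x\<in>UNIV. \<Sum>y\<in>UNIV. hcom B a x y * (\<Sum>z\<in>UNIV. hant B y z * hmul B x z c)) = hcou B a * hone B c"
    using assms(1) unfolding hopf_alg_def by blast
  have "pconv B L P (\<lambda>b h. \<Sum>b'\<in>UNIV. hant B b b' * P b' h) b h =
    (\<Sum>b1\<in>UNIV. \<Sum>b2\<in>UNIV. \<Sum>b'\<in>UNIV. hcom B b b1 b2 * hant B b2 b' * (\<Sum>h1\<in>UNIV. \<Sum>h2\<in>UNIV. hcom L h h1 h2 * P b1 h1 * P b' h2))"
    unfolding pconv_def
    apply (simp only: sum_distrib_left sum_distrib_right sum.cartesian_product UNIV_Times_UNIV)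
    apply (rule sum.reindex_bij_witness[where i="\<lambda>(b1,b2,b',(h1,h2)). (b1,b2,h1,h2,b')" and j="\<lambda>(b1,b2,h1,h2,n). (b1,b2,n,(h1,h2))"])
    by (auto simp: mult_ac)
  also have "\<dots> = (\<Sum>b1\<in>UNIV. \<Sum>b2\<in>UNIV. \<Sum>b'\<in>UNIV. hcom B b b1 b2 * hant B b2 b' * (\<Sum>c\<in>UNIV. hmul B b1 b' c * P c h))"
    by (simp only: mult_pairing)
  also have "\<dots> = (\<Sum>c\<in>UNIV. (\<Sum>b1\<in>UNIV. \<Sum>b2\<in>UNIV. hcom B b b1 b2 * (\<Sum>z\<in>UNIV. hant B b2 z * hmul B b1 z c)) * P c h)"
    apply (simp only: sum_distrib_left sum_distrib_right sum.cartesian_product UNIV_Times_UNIV)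
    apply (rule sum.reindex_bij_witness[where i="\<lambda>(c,(b1,b2,n)). (b1,b2,n,c)" and j="\<lambda>(b1,b2,b',n). (n,(b1,b2,b'))"])
    by (auto simp: mult_ac)
  also have "\<dots> = hcou B b * hcou L h" by (simp only: antipode_right mult.assoc sum_distrib_left[symmetric] unit_pairing)
  finally show "pconv B L P (\<lambda>b h. \<Sum>b'\<in>UNIV. hant B b b' * P b' h) b h = pair_counit B L b h"
    by (simp add: pair_counit_def)
qed

lemma pconv_skew_pairing_antipode_left:
  assumes "hopf_alg B"
    and mult_pairing: "\<And>b b' h. (\<Sum>c\<in>UNIV. hmul B b b' c * P c h) = (\<Sum>h1\<in>UNIV. \<Sum>h2\<in>UNIV. hcom L h h1 h2 * P b h1 * P b' h2)"
    and unit_pairing: "\<And>h. (\<Sum>c\<in>UNIV. hone B c * P c h) = hcou L h"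
  shows "pconv B L (\<lambda>b h. \<Sum>b'\<in>UNIV. hant B b b' * P b' h) P = pair_counit B L"
proof (intro ext)
  fix b h
  have antipode_left: "\<And>a c. (\<Sum>x\<in>UNIV. \<Sum>y\<in>UNIV. hcom B a x y * (\<Sum>z\<in>UNIV. hant B x z * hmul B z y c)) = hcou B a * hone B c"
    using assms(1) unfolding hopf_alg_def by blast
  have "pconv B L (\<lambda>b h. \<Sum>b'\<in>UNIV. hant B b b' * P b' h) P b h =
    (\<Sum>b1\<in>UNIV. \<Sum>b2\<in>UNIV. \<Sum>b'\<in>UNIV. hcom B b b1 b2 * hant B b1 b' * (\<Sum>h1\<in>UNIV. \<Sum>h2\<in>UNIV. hcom L h h1 h2 * P b' h1 * P b2 h2))"
    unfolding pconv_def
    apply (simp only: sum_distrib_left sum_distrib_right sum.cartesian_product UNIV_Times_UNIV)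
    apply (rule sum.reindex_bij_witness[where i="\<lambda>(b1,b2,b',(h1,h2)). (b1,b2,h1,h2,b')" and j="\<lambda>(b1,b2,h1,h2,n). (b1,b2,n,(h1,h2))"])
    by (auto simp: mult_ac)
  also have "\<dots> = (\<Sum>b1\<in>UNIV. \<Sum>b2\<in>UNIV. \<Sum>b'\<in>UNIV. hcom B b b1 b2 * hant B b1 b' * (\<Sum>c\<in>UNIV. hmul B b' b2 c * P c h))"
    by (simp only: mult_pairing)
  also have "\<dots> = (\<Sum>c\<in>UNIV. (\<Sum>b1\<in>UNIV. \<Sum>b2\<in>UNIV. hcom B b b1 b2 * (\<Sum>z\<in>UNIV. hant B b1 z * hmul B z b2 c)) * P c h)"
    apply (simp only: sum_distrib_left sum_distrib_right sum.cartesian_product UNIV_Times_UNIV)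
    apply (rule sum.reindex_bij_witness[where i="\<lambda>(c,(b1,b2,n)). (b1,b2,n,c)" and j="\<lambda>(b1,b2,b',n). (n,(b1,b2,b'))"])
    by (auto simp: mult_ac)
  also have "\<dots> = hcou B b * hcou L h" by (simp only: antipode_left mult.assoc sum_distrib_left[symmetric] unit_pairing)
  finally show "pconv B L (\<lambda>b h. \<Sum>b'\<in>UNIV. hant B b b' * P b' h) P b h = pair_counit B L b h"
    by (simp add: pair_counit_def)
qed

lemma skew_pairing_conv_inverse:
  assumes "hopf_alg B"
    and mult_pairing: "\<And>b b' h. (\<Sum>c\<in>UNIV. hmul B b b' c * P c h) = (\<Sum>h1\<in>UNIV. \<Sum>h2\<in>UNIV. hcom L h h1 h2 * P b h1 * P b' h2)"
    and unit_pairing: "\<And>h. (\<Sum>c\<in>UNIV. hone B c * P c h) = hcou L h"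
  shows "conv_inverse B L P (\<lambda>b h. \<Sum>b'\<in>UNIV. hant B b b' * P b' h)"
  unfolding conv_inverse_def
  using pconv_skew_pairing_antipode_left[OF assms] pconv_skew_pairing_antipode_right[OF assms] by blast

section \<open>Algebra and coalgebra maps\<close>

definition alg_hom :: "('a::finite, 'k::field) hopf \<Rightarrow> ('b::finite, 'k) hopf \<Rightarrow> ('a \<Rightarrow> 'b \<Rightarrow> 'k) \<Rightarrow> bool" where
  "alg_hom A B \<phi> \<longleftrightarrow>
    (\<forall>a b z. (\<Sum>c\<in>UNIV. hmul A a b c * \<phi> c z) = (\<Sum>x\<in>UNIV. \<Sum>y\<in>UNIV. \<phi> a x * \<phi> b y * hmul B x y z)) \<and>
    (\<forall>z. (\<Sum>a\<in>UNIV. hone A a * \<phi> a z) = hone B z)"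

definition coalg_hom :: "('a::finite, 'k::field) hopf \<Rightarrow> ('b::finite, 'k) hopf \<Rightarrow> ('a \<Rightarrow> 'b \<Rightarrow> 'k) \<Rightarrow> bool" where
  "coalg_hom A B \<phi> \<longleftrightarrow>
    (\<forall>a x y. (\<Sum>z\<in>UNIV. \<phi> a z * hcom B z x y) = (\<Sum>c\<in>UNIV. \<Sum>d\<in>UNIV. hcom A a c d * \<phi> c x * \<phi> d y)) \<and>
    (\<forall>a. (\<Sum>z\<in>UNIV. \<phi> a z * hcou B z) = hcou A a)"

lemma alg_hom_kd: "alg_hom K K kd"
  unfolding alg_hom_def by (simp add: kd_simps)

lemma coalg_hom_kd: "coalg_hom K K kd"
  unfolding coalg_hom_def by (simp add: kd_simps)

lemma alg_hom_inverse:
  assumes hom: "alg_hom A B \<phi>" and inv1: "mat_mult \<phi> \<psi> = kd" and inv2: "mat_mult \<psi> \<phi> = kd"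
  shows "alg_hom B A \<psi>"
proof -
  have mult: "\<And>a b z. (\<Sum>c\<in>UNIV. hmul A a b c * \<phi> c z) = (\<Sum>x\<in>UNIV. \<Sum>y\<in>UNIV. \<phi> a x * \<phi> b y * hmul B x y z)"
    and unit: "\<And>z. (\<Sum>a\<in>UNIV. hone A a * \<phi> a z) = hone B z" using hom unfolding alg_hom_def by blast+
  have "(\<Sum>c\<in>UNIV. hmul B a b c * \<psi> c z) = (\<Sum>x\<in>UNIV. \<Sum>y\<in>UNIV. \<psi> a x * \<psi> b y * hmul A x y z)" for a b z
  proof (rule mat_cancel_right[OF inv1, where F="\<lambda>z. \<Sum>c\<in>UNIV. hmul B a b c * \<psi> c z"])
    fix w
    have "(\<Sum>z\<in>UNIV. (\<Sum>c\<in>UNIV. hmul B a b c * \<psi> c z) * \<phi> z w) = (\<Sum>c\<in>UNIV. hmul B a b c * (\<Sum>z\<in>UNIV. \<psi> c z * \<phi> z w))"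
      by (simp only: sum_distrib_left sum_distrib_right mult.assoc) (rule sum.swap)
    also have "\<dots> = hmul B a b w" by (simp add: mat_mult_kd_apply[OF inv2])
    also have "\<dots> = (\<Sum>x\<in>UNIV. \<Sum>y\<in>UNIV. (\<Sum>X\<in>UNIV. \<psi> a X * \<phi> X x) * (\<Sum>Y\<in>UNIV. \<psi> b Y * \<phi> Y y) * hmul B x y w)"
      by (simp add: mat_mult_kd_apply[OF inv2] kd_simps)
    also have "\<dots> = (\<Sum>X\<in>UNIV. \<Sum>Y\<in>UNIV. \<psi> a X * \<psi> b Y * (\<Sum>x\<in>UNIV. \<Sum>y\<in>UNIV. \<phi> X x * \<phi> Y y * hmul B x y w))"
      apply (simp only: sum_distrib_left sum_distrib_right sum.cartesian_product UNIV_Times_UNIV)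
      apply (rule sum.reindex_bij_witness[where i="\<lambda>(X,Y,(x,y)). (x,y,(Y,X))" and j="\<lambda>(x,y,(Y,X)). (X,Y,(x,y))"])
      by (auto simp: mult_ac)
    also have "\<dots> = (\<Sum>X\<in>UNIV. \<Sum>Y\<in>UNIV. \<psi> a X * \<psi> b Y * (\<Sum>c\<in>UNIV. hmul A X Y c * \<phi> c w))"
      by (simp only: mult)
    also have "\<dots> = (\<Sum>z\<in>UNIV. (\<Sum>x\<in>UNIV. \<Sum>y\<in>UNIV. \<psi> a x * \<psi> b y * hmul A x y z) * \<phi> z w)"
      apply (simp only: sum_distrib_left sum_distrib_right sum.cartesian_product UNIV_Times_UNIV)
      apply (rule sum.reindex_bij_witness[where i="\<lambda>(z,(x,y)). (x,y,z)" and j="\<lambda>(x,y,z). (z,(x,y))"])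
      by (auto simp: mult_ac)
    finally show "(\<Sum>z\<in>UNIV. (\<Sum>c\<in>UNIV. hmul B a b c * \<psi> c z) * \<phi> z w) = (\<Sum>z\<in>UNIV. (\<Sum>x\<in>UNIV. \<Sum>y\<in>UNIV. \<psi> a x * \<psi> b y * hmul A x y z) * \<phi> z w)" .
  qed
  moreover have "(\<Sum>a\<in>UNIV. hone B a * \<psi> a z) = hone A z" for z
  proof (rule mat_cancel_right[OF inv1, where F="\<lambda>z. \<Sum>a\<in>UNIV. hone B a * \<psi> a z"])
    fix w
    have "(\<Sum>z\<in>UNIV. (\<Sum>a\<in>UNIV. hone B a * \<psi> a z) * \<phi> z w) = (\<Sum>a\<in>UNIV. hone B a * (\<Sum>z\<in>UNIV. \<psi> a z * \<phi> z w))"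
      by (simp only: sum_distrib_left sum_distrib_right mult.assoc) (rule sum.swap)
    also have "\<dots> = hone B w" by (simp add: mat_mult_kd_apply[OF inv2])
    finally show "(\<Sum>z\<in>UNIV. (\<Sum>a\<in>UNIV. hone B a * \<psi> a z) * \<phi> z w) = (\<Sum>z\<in>UNIV. hone A z * \<phi> z w)" by (simp add: unit)
  qed
  ultimately show ?thesis unfolding alg_hom_def by blast
qed

lemma coalg_hom_inverse:
  assumes hom: "coalg_hom A B \<phi>" and inv1: "mat_mult \<phi> \<psi> = kd" and inv2: "mat_mult \<psi> \<phi> = kd"
  shows "coalg_hom B A \<psi>"
proof -
  have comult: "\<And>a x y. (\<Sum>z\<in>UNIV. \<phi> a z * hcom B z x y) = (\<Sum>c\<in>UNIV. \<Sum>d\<in>UNIV. hcom A a c d * \<phi> c x * \<phi> d y)"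
    and counit: "\<And>a. (\<Sum>z\<in>UNIV. \<phi> a z * hcou B z) = hcou A a" using hom unfolding coalg_hom_def by blast+
  have "(\<Sum>z\<in>UNIV. \<psi> a z * hcom A z x y) = (\<Sum>c\<in>UNIV. \<Sum>d\<in>UNIV. hcom B a c d * \<psi> c x * \<psi> d y)" for a x y
  proof (rule mat_cancel_left[OF inv2, where F="\<lambda>a. \<Sum>z\<in>UNIV. \<psi> a z * hcom A z x y"])
    fix v
    have "(\<Sum>a\<in>UNIV. \<phi> v a * (\<Sum>z\<in>UNIV. \<psi> a z * hcom A z x y)) = (\<Sum>z\<in>UNIV. (\<Sum>a\<in>UNIV. \<phi> v a * \<psi> a z) * hcom A z x y)"
      by (simp only: sum_distrib_left sum_distrib_right mult.assoc) (rule sum.swap)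
    also have "\<dots> = hcom A v x y" by (simp add: mat_mult_kd_apply[OF inv1])
    also have "\<dots> = (\<Sum>X\<in>UNIV. \<Sum>Y\<in>UNIV. hcom A v X Y * (\<Sum>c\<in>UNIV. \<phi> X c * \<psi> c x) * (\<Sum>d\<in>UNIV. \<phi> Y d * \<psi> d y))"
      by (simp add: mat_mult_kd_apply[OF inv1] kd_simps)
    also have "\<dots> = (\<Sum>c\<in>UNIV. \<Sum>d\<in>UNIV. (\<Sum>X\<in>UNIV. \<Sum>Y\<in>UNIV. hcom A v X Y * \<phi> X c * \<phi> Y d) * \<psi> c x * \<psi> d y)"
      apply (simp only: sum_distrib_left sum_distrib_right sum.cartesian_product UNIV_Times_UNIV)
      apply (rule sum.reindex_bij_witness[where i="\<lambda>(c,d,(X,Y)). (X,Y,d,c)" and j="\<lambda>(X,Y,d,c). (c,d,(X,Y))"])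
      by (auto simp: mult_ac)
    also have "\<dots> = (\<Sum>c\<in>UNIV. \<Sum>d\<in>UNIV. (\<Sum>z\<in>UNIV. \<phi> v z * hcom B z c d) * \<psi> c x * \<psi> d y)"
      by (simp only: comult)
    also have "\<dots> = (\<Sum>a\<in>UNIV. \<phi> v a * (\<Sum>c\<in>UNIV. \<Sum>d\<in>UNIV. hcom B a c d * \<psi> c x * \<psi> d y))"
      apply (simp only: sum_distrib_left sum_distrib_right sum.cartesian_product UNIV_Times_UNIV)
      apply (rule sum.reindex_bij_witness[where i="\<lambda>(a,(c,d)). (c,d,a)" and j="\<lambda>(c,d,a). (a,(c,d))"])
      by (auto simp: mult_ac)
    finally show "(\<Sum>a\<in>UNIV. \<phi> v a * (\<Sum>z\<in>UNIV. \<psi> a z * hcom A z x y)) = (\<Sum>a\<in>UNIV. \<phi> v a * (\<Sum>c\<in>UNIV. \<Sum>d\<in>UNIV. hcom B a c d * \<psi> c x * \<psi> d y))" .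
  qed
  moreover have "(\<Sum>z\<in>UNIV. \<psi> a z * hcou A z) = hcou B a" for a
  proof (rule mat_cancel_left[OF inv2, where F="\<lambda>a. \<Sum>z\<in>UNIV. \<psi> a z * hcou A z"])
    fix v
    have "(\<Sum>a\<in>UNIV. \<phi> v a * (\<Sum>z\<in>UNIV. \<psi> a z * hcou A z)) = (\<Sum>z\<in>UNIV. (\<Sum>a\<in>UNIV. \<phi> v a * \<psi> a z) * hcou A z)"
      by (simp only: sum_distrib_left sum_distrib_right mult.assoc) (rule sum.swap)
    also have "\<dots> = hcou A v" by (simp add: mat_mult_kd_apply[OF inv1])
    finally show "(\<Sum>a\<in>UNIV. \<phi> v a * (\<Sum>z\<in>UNIV. \<psi> a z * hcou A z)) = (\<Sum>a\<in>UNIV. \<phi> v a * hcou B a)" by (simp add: counit)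
  qed
  ultimately show ?thesis unfolding coalg_hom_def by blast
qed

section \<open>Pulling back pairings\<close>

definition pair_pullback :: "('b::finite \<Rightarrow> 'x::finite \<Rightarrow> 'k::field) \<Rightarrow> ('l::finite \<Rightarrow> 'y::finite \<Rightarrow> 'k) \<Rightarrow>
    ('x \<Rightarrow> 'y \<Rightarrow> 'k) \<Rightarrow> 'b \<Rightarrow> 'l \<Rightarrow> 'k"
  where "pair_pullback \<theta> \<psi> F = (\<lambda>b h. \<Sum>x\<in>UNIV. \<Sum>y\<in>UNIV. \<theta> b x * \<psi> h y * F x y)"

lemma pair_pullback_kd_right: "pair_pullback \<theta> kd F = mat_mult \<theta> F"
  by (simp add: pair_pullback_def mat_mult_def fun_eq_iff kd_simps)

lemma pair_pullback_kd_left: "pair_pullback kd \<psi> F = mat_mult F (mat_transpose \<psi>)"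
  unfolding pair_pullback_def mat_mult_def mat_transpose_def
  by (simp add: mult.assoc flip: sum_distrib_left) (simp add: mult.commute)

lemma pair_pullback_of_kd: "pair_pullback \<theta> \<psi> kd = mat_mult \<theta> (mat_transpose \<psi>)"
  by (simp add: pair_pullback_def mat_mult_def mat_transpose_def fun_eq_iff kd_simps)

lemma pconv_pair_pullback:
  assumes \<theta>: "coalg_hom B B' \<theta>" and \<psi>: "coalg_hom L L' \<psi>"
  shows "pconv B L (pair_pullback \<theta> \<psi> f) (pair_pullback \<theta> \<psi> g) = pair_pullback \<theta> \<psi> (pconv B' L' f g)"
proof (intro ext)
  fix b h
  have comult_\<theta>: "\<And>a x y. (\<Sum>z\<in>UNIV. \<theta> a z * hcom B' z x y) = (\<Sum>c\<in>UNIV. \<Sum>d\<in>UNIV. hcom B a c d * \<theta> c x * \<theta> d y)"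
    using \<theta> unfolding coalg_hom_def by blast
  have comult_\<psi>: "\<And>a x y. (\<Sum>z\<in>UNIV. \<psi> a z * hcom L' z x y) = (\<Sum>c\<in>UNIV. \<Sum>d\<in>UNIV. hcom L a c d * \<psi> c x * \<psi> d y)"
    using \<psi> unfolding coalg_hom_def by blast
  have "pair_pullback \<theta> \<psi> (pconv B' L' f g) b h = (\<Sum>x1\<in>UNIV. \<Sum>x2\<in>UNIV. \<Sum>y1\<in>UNIV. \<Sum>y2\<in>UNIV.
     (\<Sum>z\<in>UNIV. \<theta> b z * hcom B' z x1 x2) * (\<Sum>z\<in>UNIV. \<psi> h z * hcom L' z y1 y2) * f x1 y1 * g x2 y2)"
    unfolding pair_pullback_def pconv_def
    apply (simp only: sum_distrib_left sum_distrib_right sum.cartesian_product UNIV_Times_UNIV)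
    apply (rule sum.reindex_bij_witness[where i="\<lambda>(x1,x2,y1,y2,(n,na)). (na,n,(x1,x2,y1,y2))" and j="\<lambda>(x,y,(b1,b2,h1,h2)). (b1,b2,h1,h2,(y,x))"])
    by (auto simp: mult_ac)
  also have "\<dots> = (\<Sum>x1\<in>UNIV. \<Sum>x2\<in>UNIV. \<Sum>y1\<in>UNIV. \<Sum>y2\<in>UNIV.
     (\<Sum>c\<in>UNIV. \<Sum>d\<in>UNIV. hcom B b c d * \<theta> c x1 * \<theta> d x2) * (\<Sum>c\<in>UNIV. \<Sum>d\<in>UNIV. hcom L h c d * \<psi> c y1 * \<psi> d y2) * f x1 y1 * g x2 y2)"
    by (simp only: comult_\<theta> comult_\<psi>)
  also have "\<dots> = pconv B L (pair_pullback \<theta> \<psi> f) (pair_pullback \<theta> \<psi> g) b h"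
    unfolding pair_pullback_def pconv_def
    apply (simp only: sum_distrib_left sum_distrib_right sum.cartesian_product UNIV_Times_UNIV)
    apply (rule sum.reindex_bij_witness[where i="\<lambda>(b1,b2,h1,h2,((gx,gy),(fx,fy))). (fx,gx,fy,gy,((h1,h2),(b1,b2)))" and j="\<lambda>(x1,x2,y1,y2,((cL,dL),(cB,dB))). (cB,dB,cL,dL,((x2,y2),(x1,y1)))"])
    by (auto simp: mult_ac)
  finally show "pconv B L (pair_pullback \<theta> \<psi> f) (pair_pullback \<theta> \<psi> g) b h = pair_pullback \<theta> \<psi> (pconv B' L' f g) b h" ..
qed

lemma pair_counit_pullback:
  assumes "coalg_hom B B' \<theta>" and "coalg_hom L L' \<psi>"
  shows "pair_pullback \<theta> \<psi> (pair_counit B' L') = pair_counit B L"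
proof (intro ext)
  fix b h
  have "pair_pullback \<theta> \<psi> (pair_counit B' L') b h = (\<Sum>x\<in>UNIV. \<theta> b x * hcou B' x) * (\<Sum>y\<in>UNIV. \<psi> h y * hcou L' y)"
    unfolding pair_pullback_def pair_counit_def sum_product by (simp add: mult_ac)
  also have "\<dots> = pair_counit B L b h"
    using assms unfolding coalg_hom_def pair_counit_def by simp
  finally show "pair_pullback \<theta> \<psi> (pair_counit B' L') b h = pair_counit B L b h" .
qed

lemma conv_inverse_pullback:
  assumes "coalg_hom B B' \<theta>" and "coalg_hom L L' \<psi>" and "conv_inverse B' L' P Q"
  shows "conv_inverse B L (pair_pullback \<theta> \<psi> P) (pair_pullback \<theta> \<psi> Q)"
  using assms unfolding conv_inverse_def
  by (simp add: pconv_pair_pullback[OF assms(1,2)] pair_counit_pullback[OF assms(1,2)])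

lemma pinv_pullback:
  assumes "coalgebra B" "coalgebra L" "coalgebra B'" "coalgebra L'"
    and "coalg_hom B B' \<theta>" and "coalg_hom L L' \<psi>" and "conv_inverse B' L' P Q"
  shows "pinv B L (pair_pullback \<theta> \<psi> P) = pair_pullback \<theta> \<psi> (pinv B' L' P)"
  using assms by (simp add: pinv_eqI conv_inverse_pullback)

lemma pconv_transpose:
  "pconv L B (mat_transpose f) (mat_transpose g) = mat_transpose (pconv B L f g)"
  unfolding pconv_def mat_transpose_def
  by (intro ext) (simp only: sum.cartesian_product UNIV_Times_UNIV,
      rule sum.reindex_bij_witness[where i="\<lambda>(a,b,c,d). (c,d,a,b)" and j="\<lambda>(a,b,c,d). (c,d,a,b)"], auto simp: mult_ac)

lemma conv_inverse_transpose:
  "conv_inverse B L P Q \<Longrightarrow> conv_inverse L B (mat_transpose P) (mat_transpose Q)"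
  unfolding conv_inverse_def pconv_transpose by (simp add: pair_counit_def mat_transpose_def fun_eq_iff mult.commute)

lemma pinv_transpose:
  assumes "coalgebra B" and "coalgebra L" and "conv_inverse B L P Q"
  shows "pinv L B (mat_transpose P) = mat_transpose (pinv B L P)"
  using assms by (simp add: pinv_eqI conv_inverse_transpose)

section \<open>Opposites and duals\<close>

lemma hop_simps [simp]:
  "hmul (hop A) = (\<lambda>a b c. hmul A b a c)" "hone (hop A) = hone A" "hcom (hop A) = hcom A" "hcou (hop A) = hcou A"
  unfolding hop_def by simp_all

definition algebra :: "('i::finite, 'k::field) hopf \<Rightarrow> bool" where
  "algebra H \<longleftrightarrow>
    (\<forall>a b c d. (\<Sum>e\<in>UNIV. hmul H a b e * hmul H e c d) = (\<Sum>e\<in>UNIV. hmul H b c e * hmul H a e d)) \<and>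
    (\<forall>a c. (\<Sum>e\<in>UNIV. hone H e * hmul H e a c) = kd a c \<and> (\<Sum>e\<in>UNIV. hone H e * hmul H a e c) = kd a c)"

lemma hopf_alg_algebra: "hopf_alg H \<Longrightarrow> algebra H"
  unfolding hopf_alg_def algebra_def by (elim conjE) (rule conjI; assumption)

lemma algebra_hop:
  assumes "algebra K"
  shows "algebra (hop K)"
proof -
  have assoc: "\<And>a b c d. (\<Sum>e\<in>UNIV. hmul K a b e * hmul K e c d) = (\<Sum>e\<in>UNIV. hmul K b c e * hmul K a e d)"
    and unit_left: "\<And>a c. (\<Sum>e\<in>UNIV. hone K e * hmul K e a c) = kd a c"
    and unit_right: "\<And>a c. (\<Sum>e\<in>UNIV. hone K e * hmul K a e c) = kd a c"
    using assms unfolding algebra_def by blast+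
  show ?thesis
    unfolding algebra_def hop_simps
    using assoc unit_left unit_right by (simp add: mult.commute)
qed

lemma coalgebra_hop: "coalgebra K \<Longrightarrow> coalgebra (hop K)"
  unfolding coalgebra_def hop_simps .

lemma alg_hom_hop_hop [simp]: "alg_hom A (hop (hop K)) \<phi> = alg_hom A K \<phi>"
  unfolding alg_hom_def hop_simps ..

lemma coalg_hom_hop_left [simp]: "coalg_hom (hop K) A \<phi> = coalg_hom K A \<phi>"
  unfolding coalg_hom_def hop_simps ..

lemma coalg_hom_hop_right [simp]: "coalg_hom A (hop K) \<phi> = coalg_hom A K \<phi>"
  unfolding coalg_hom_def hop_simps ..

lemma hcop_hdual_simps [simp]:
  "hmul (hcop (hdual K)) = (\<lambda>x y a. hcom K a x y)" "hone (hcop (hdual K)) = hcou K"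
  "hcom (hcop (hdual K)) = (\<lambda>a x y. hmul K y x a)" "hcou (hcop (hdual K)) = hone K"
  unfolding hcop_def hdual_def by simp_all

lemma hdual_hdual [simp]: "hdual (hdual H) = H"
  by (cases H) (simp add: hdual_def)

lemma coalgebra_hcop_hdual:
  assumes "algebra K"
  shows "coalgebra (hcop (hdual K))"
proof -
  have assoc: "\<And>a b c d. (\<Sum>e\<in>UNIV. hmul K a b e * hmul K e c d) = (\<Sum>e\<in>UNIV. hmul K b c e * hmul K a e d)"
    and unit_left: "\<And>a c. (\<Sum>e\<in>UNIV. hone K e * hmul K e a c) = kd a c"
    and unit_right: "\<And>a c. (\<Sum>e\<in>UNIV. hone K e * hmul K a e c) = kd a c"
    using assms unfolding algebra_def by blast+
  show ?thesis
    unfolding coalgebra_def hcop_hdual_simps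
  proof (intro conjI allI)
    fix a x y z
    show "(\<Sum>e\<in>UNIV. hmul K z e a * hmul K y x e) = (\<Sum>e\<in>UNIV. hmul K e x a * hmul K z y e)"
      using assoc[of z y x a] by (simp add: mult.commute)
  next
    fix a b
    show "(\<Sum>e\<in>UNIV. hmul K b e a * hone K e) = kd a b"
      using unit_right[of b a] by (simp add: mult.commute kd_commute)
    show "(\<Sum>e\<in>UNIV. hmul K e b a * hone K e) = kd a b"
      using unit_left[of b a] by (simp add: mult.commute kd_commute)
  qed
qed

section \<open>Maps between generalised doubles\<close>

lemma gen_double_simps [simp]:
  "hmul (gen_double B L P) = gd_mul B L P"
  "hone (gen_double B L P) = (\<lambda>(b, h). hone B b * hone L h)"
  "hcom (gen_double B L P) = (\<lambda>(b, h) (b1, h1) (b2, h2). hcom B b b1 b2 * hcom L h h1 h2)"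
  "hcou (gen_double B L P) = (\<lambda>(b, h). hcou B b * hcou L h)"
  unfolding gen_double_def by simp_all

lemma hopf_hom_iff: "hopf_hom A B \<phi> \<longleftrightarrow> alg_hom A B \<phi> \<and> coalg_hom A B \<phi>"
  unfolding hopf_hom_def alg_hom_def coalg_hom_def by blast

lemma com2_coalg_hom:
  assumes \<theta>: "coalg_hom B B' \<theta>"
  shows "(\<Sum>z\<in>UNIV. \<theta> a z * com2 B' z X1 X2 X3) =
     (\<Sum>x1\<in>UNIV. \<Sum>x2\<in>UNIV. \<Sum>x3\<in>UNIV. com2 B a x1 x2 x3 * \<theta> x1 X1 * \<theta> x2 X2 * \<theta> x3 X3)"
proof -
  have comult: "\<And>a x y. (\<Sum>z\<in>UNIV. \<theta> a z * hcom B' z x y) = (\<Sum>c\<in>UNIV. \<Sum>d\<in>UNIV. hcom B a c d * \<theta> c x * \<theta> d y)"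
    using \<theta> unfolding coalg_hom_def by blast
  have "(\<Sum>z\<in>UNIV. \<theta> a z * com2 B' z X1 X2 X3) = (\<Sum>e\<in>UNIV. (\<Sum>z\<in>UNIV. \<theta> a z * hcom B' z e X3) * hcom B' e X1 X2)"
    unfolding com2_def
    apply (simp only: sum_distrib_left sum_distrib_right sum.cartesian_product UNIV_Times_UNIV)
    apply (rule sum.reindex_bij_witness[where i="\<lambda>(e,n). (n,e)" and j="\<lambda>(e,n). (n,e)"])
    by (auto simp: mult_ac)
  also have "\<dots> = (\<Sum>e\<in>UNIV. (\<Sum>c\<in>UNIV. \<Sum>d\<in>UNIV. hcom B a c d * \<theta> c e * \<theta> d X3) * hcom B' e X1 X2)"
    by (simp only: comult)
  also have "\<dots> = (\<Sum>c\<in>UNIV. \<Sum>d\<in>UNIV. hcom B a c d * (\<Sum>e\<in>UNIV. \<theta> c e * hcom B' e X1 X2) * \<theta> d X3)"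
    apply (simp only: sum_distrib_left sum_distrib_right sum.cartesian_product UNIV_Times_UNIV)
    apply (rule sum.reindex_bij_witness[where i="\<lambda>(c,d,e). (e,c,d)" and j="\<lambda>(e,c,d). (c,d,e)"])
    by (auto simp: mult_ac)
  also have "\<dots> = (\<Sum>c\<in>UNIV. \<Sum>d\<in>UNIV. hcom B a c d * (\<Sum>u\<in>UNIV. \<Sum>v\<in>UNIV. hcom B c u v * \<theta> u X1 * \<theta> v X2) * \<theta> d X3)"
    by (simp only: comult)
  also have "\<dots> = (\<Sum>x1\<in>UNIV. \<Sum>x2\<in>UNIV. \<Sum>x3\<in>UNIV. com2 B a x1 x2 x3 * \<theta> x1 X1 * \<theta> x2 X2 * \<theta> x3 X3)"
    unfolding com2_def
    apply (simp only: sum_distrib_left sum_distrib_right sum.cartesian_product UNIV_Times_UNIV)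
    apply (rule sum.reindex_bij_witness[where i="\<lambda>(x1,x2,x3,e). (e,x3,x1,x2)" and j="\<lambda>(c,d,u,v). (u,v,d,c)"])
    by (auto simp: mult_ac)
  finally show ?thesis .
qed

lemma gd_mul_expand:
  "(\<Sum>c1\<in>UNIV. \<Sum>c2\<in>UNIV. gd_mul B L P (b,h) (b',h') (c1,c2) * (f c1 * g c2)) =
    (\<Sum>x1\<in>UNIV. \<Sum>x2\<in>UNIV. \<Sum>x3\<in>UNIV. \<Sum>y1\<in>UNIV. \<Sum>y2\<in>UNIV. \<Sum>y3\<in>UNIV.
      com2 B b' x1 x2 x3 * com2 L h y1 y2 y3 * P x1 y1 * pinv B L P x3 y3 *
      (\<Sum>c1\<in>UNIV. hmul B b x2 c1 * f c1) * (\<Sum>c2\<in>UNIV. hmul L y2 h' c2 * g c2))"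
  unfolding gd_mul_def prod.case
  apply (simp only: sum_distrib_left sum_distrib_right sum.cartesian_product UNIV_Times_UNIV)
  apply (rule sum.reindex_bij_witness[where i="\<lambda>(x1,x2,x3,y1,y2,y3,c2,c1). (c1,c2,x1,x2,x3,y1,y2,y3)"
      and j="\<lambda>(c1,c2,x1,x2,x3,y1,y2,y3). (x1,x2,x3,y1,y2,y3,c2,c1)"])
  by (auto simp: mult_ac)

lemma gd_mul_tensor:
  fixes \<theta> \<psi> P'
  defines P: "P \<equiv> pair_pullback \<theta> \<psi> P'"
  assumes alg_\<theta>: "alg_hom B B' \<theta>" and alg_\<psi>: "alg_hom L L' \<psi>" and coalg_\<theta>: "coalg_hom B B' \<theta>" and coalg_\<psi>: "coalg_hom L L' \<psi>"
    and pinv: "pinv B L P = pair_pullback \<theta> \<psi> (pinv B' L' P')"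
  shows "(\<Sum>c1\<in>UNIV. \<Sum>c2\<in>UNIV. gd_mul B L P (b,h) (b',h') (c1,c2) * (\<theta> c1 x * \<psi> c2 y))
   = (\<Sum>u\<in>UNIV. \<Sum>v\<in>UNIV. \<Sum>u2\<in>UNIV. \<Sum>v2\<in>UNIV. (\<theta> b u * \<psi> h v) * (\<theta> b' u2 * \<psi> h' v2) * gd_mul B' L' P' (u,v) (u2,v2) (x,y))"
proof -
  define Q where "Q = pinv B L P"
  define Q' where "Q' = pinv B' L' P'"
  have Q: "Q = pair_pullback \<theta> \<psi> Q'" unfolding Q_def Q'_def by (rule pinv)
  have mult_\<theta>: "\<And>a b z. (\<Sum>c\<in>UNIV. hmul B a b c * \<theta> c z) = (\<Sum>x\<in>UNIV. \<Sum>y\<in>UNIV. \<theta> a x * \<theta> b y * hmul B' x y z)"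
    using alg_\<theta> unfolding alg_hom_def by blast
  have mult_\<psi>: "\<And>a b z. (\<Sum>c\<in>UNIV. hmul L a b c * \<psi> c z) = (\<Sum>x\<in>UNIV. \<Sum>y\<in>UNIV. \<psi> a x * \<psi> b y * hmul L' x y z)"
    using alg_\<psi> unfolding alg_hom_def by blast
  have "(\<Sum>c1\<in>UNIV. \<Sum>c2\<in>UNIV. gd_mul B L P (b,h) (b',h') (c1,c2) * (\<theta> c1 x * \<psi> c2 y)) =
    (\<Sum>x1\<in>UNIV. \<Sum>x2\<in>UNIV. \<Sum>x3\<in>UNIV. \<Sum>y1\<in>UNIV. \<Sum>y2\<in>UNIV. \<Sum>y3\<in>UNIV.
      com2 B b' x1 x2 x3 * com2 L h y1 y2 y3 * P x1 y1 * Q x3 y3 *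
      (\<Sum>c1\<in>UNIV. hmul B b x2 c1 * \<theta> c1 x) * (\<Sum>c2\<in>UNIV. hmul L y2 h' c2 * \<psi> c2 y))"
    unfolding Q_def by (rule gd_mul_expand)
  also have "\<dots> = (\<Sum>x1\<in>UNIV. \<Sum>x2\<in>UNIV. \<Sum>x3\<in>UNIV. \<Sum>y1\<in>UNIV. \<Sum>y2\<in>UNIV. \<Sum>y3\<in>UNIV.
      com2 B b' x1 x2 x3 * com2 L h y1 y2 y3 * P x1 y1 * Q x3 y3 *
      (\<Sum>u\<in>UNIV. \<Sum>X2\<in>UNIV. \<theta> b u * \<theta> x2 X2 * hmul B' u X2 x) * (\<Sum>Y2\<in>UNIV. \<Sum>v2\<in>UNIV. \<psi> y2 Y2 * \<psi> h' v2 * hmul L' Y2 v2 y))"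
    by (simp only: mult_\<theta> mult_\<psi>)
  also have "\<dots> = (\<Sum>x1\<in>UNIV. \<Sum>x2\<in>UNIV. \<Sum>x3\<in>UNIV. \<Sum>y1\<in>UNIV. \<Sum>y2\<in>UNIV. \<Sum>y3\<in>UNIV.
      com2 B b' x1 x2 x3 * com2 L h y1 y2 y3 * (\<Sum>X1\<in>UNIV. \<Sum>Y1\<in>UNIV. \<theta> x1 X1 * \<psi> y1 Y1 * P' X1 Y1) *
      (\<Sum>X3\<in>UNIV. \<Sum>Y3\<in>UNIV. \<theta> x3 X3 * \<psi> y3 Y3 * Q' X3 Y3) *
      (\<Sum>u\<in>UNIV. \<Sum>X2\<in>UNIV. \<theta> b u * \<theta> x2 X2 * hmul B' u X2 x) * (\<Sum>Y2\<in>UNIV. \<Sum>v2\<in>UNIV. \<psi> y2 Y2 * \<psi> h' v2 * hmul L' Y2 v2 y))"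
    by (simp only: P Q pair_pullback_def)
  also have "\<dots> = (\<Sum>u\<in>UNIV. \<Sum>v2\<in>UNIV. \<Sum>X1\<in>UNIV. \<Sum>X2\<in>UNIV. \<Sum>X3\<in>UNIV. \<Sum>Y1\<in>UNIV. \<Sum>Y2\<in>UNIV. \<Sum>Y3\<in>UNIV.
      \<theta> b u * \<psi> h' v2 * 
      (\<Sum>x1\<in>UNIV. \<Sum>x2\<in>UNIV. \<Sum>x3\<in>UNIV. com2 B b' x1 x2 x3 * \<theta> x1 X1 * \<theta> x2 X2 * \<theta> x3 X3) *
      (\<Sum>y1\<in>UNIV. \<Sum>y2\<in>UNIV. \<Sum>y3\<in>UNIV. com2 L h y1 y2 y3 * \<psi> y1 Y1 * \<psi> y2 Y2 * \<psi> y3 Y3) *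
      P' X1 Y1 * Q' X3 Y3 * hmul B' u X2 x * hmul L' Y2 v2 y)"
    apply (simp only: sum_distrib_left sum_distrib_right sum.cartesian_product UNIV_Times_UNIV)
    apply (rule sum.reindex_bij_witness[where i="\<lambda>(u,v2,X1,X2,X3,Y1,Y2,Y3,((y1,y2,y3),(x1,x2,x3))). (x1,x2,x3,y1,y2,y3,(Y2,v2),((u,X2),((X3,Y3),(X1,Y1))))"
       and j="\<lambda>(x1,x2,x3,y1,y2,y3,(Y2,v2),((u,X2),((X3,Y3),(X1,Y1)))). (u,v2,X1,X2,X3,Y1,Y2,Y3,((y1,y2,y3),(x1,x2,x3)))"])
    by (auto simp: mult_ac)
  also have "\<dots> = (\<Sum>u\<in>UNIV. \<Sum>v2\<in>UNIV. \<Sum>X1\<in>UNIV. \<Sum>X2\<in>UNIV. \<Sum>X3\<in>UNIV. \<Sum>Y1\<in>UNIV. \<Sum>Y2\<in>UNIV. \<Sum>Y3\<in>UNIV.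
      \<theta> b u * \<psi> h' v2 * 
      (\<Sum>u2\<in>UNIV. \<theta> b' u2 * com2 B' u2 X1 X2 X3) * (\<Sum>v\<in>UNIV. \<psi> h v * com2 L' v Y1 Y2 Y3) *
      P' X1 Y1 * Q' X3 Y3 * hmul B' u X2 x * hmul L' Y2 v2 y)"
    by (simp only: com2_coalg_hom[OF coalg_\<theta>] com2_coalg_hom[OF coalg_\<psi>])
  also have "\<dots> = (\<Sum>u\<in>UNIV. \<Sum>v\<in>UNIV. \<Sum>u2\<in>UNIV. \<Sum>v2\<in>UNIV. (\<theta> b u * \<psi> h v) * (\<theta> b' u2 * \<psi> h' v2) * gd_mul B' L' P' (u,v) (u2,v2) (x,y))"
    unfolding gd_mul_def Q'_def[symmetric] prod.case
    apply (simp only: sum_distrib_left sum_distrib_right sum.cartesian_product UNIV_Times_UNIV)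
    apply (rule sum.reindex_bij_witness[where i="\<lambda>(u,v,u2,v2,X1,X2,X3,Y1,Y2,Y3). (u,v2,X1,X2,X3,Y1,Y2,Y3,v,u2)"
       and j="\<lambda>(u,v2,X1,X2,X3,Y1,Y2,Y3,v,u2). (u,v,u2,v2,X1,X2,X3,Y1,Y2,Y3)"])
    by (auto simp: mult_ac)
  finally show ?thesis .
qed

lemma gd_mul_swap:
  fixes \<theta> \<psi> P'
  defines P: "P \<equiv> mat_transpose (pair_pullback \<psi> \<theta> P')"
  assumes alg_\<theta>: "alg_hom B (hop L') \<theta>" and alg_\<psi>: "alg_hom L (hop B') \<psi>" and coalg_\<theta>: "coalg_hom B L' \<theta>" and coalg_\<psi>: "coalg_hom L B' \<psi>"
    and pinv: "pinv B L P = mat_transpose (pair_pullback \<psi> \<theta> (pinv B' L' P'))"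
  shows "(\<Sum>c1\<in>UNIV. \<Sum>c2\<in>UNIV. gd_mul B L P (b,h) (b',h') (c1,c2) * (\<psi> c2 z1 * \<theta> c1 z2))
   = (\<Sum>p1\<in>UNIV. \<Sum>p2\<in>UNIV. \<Sum>q1\<in>UNIV. \<Sum>q2\<in>UNIV. (\<psi> h p1 * \<theta> b p2) * (\<psi> h' q1 * \<theta> b' q2) * gd_mul B' L' P' (q1,q2) (p1,p2) (z1,z2))"
proof -
  define Q where "Q = pinv B L P"
  define Q' where "Q' = pinv B' L' P'"
  have Q: "Q = mat_transpose (pair_pullback \<psi> \<theta> Q')" unfolding Q_def Q'_def by (rule pinv)
  have mult_\<theta>: "\<And>a b z. (\<Sum>c\<in>UNIV. hmul B a b c * \<theta> c z) = (\<Sum>x\<in>UNIV. \<Sum>y\<in>UNIV. \<theta> a x * \<theta> b y * hmul L' y x z)"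
    using alg_\<theta> unfolding alg_hom_def hop_simps by blast
  have mult_\<psi>: "\<And>a b z. (\<Sum>c\<in>UNIV. hmul L a b c * \<psi> c z) = (\<Sum>x\<in>UNIV. \<Sum>y\<in>UNIV. \<psi> a x * \<psi> b y * hmul B' y x z)"
    using alg_\<psi> unfolding alg_hom_def hop_simps by blast
  have "(\<Sum>c1\<in>UNIV. \<Sum>c2\<in>UNIV. gd_mul B L P (b,h) (b',h') (c1,c2) * (\<psi> c2 z1 * \<theta> c1 z2)) =
      (\<Sum>c1\<in>UNIV. \<Sum>c2\<in>UNIV. gd_mul B L P (b,h) (b',h') (c1,c2) * (\<theta> c1 z2 * \<psi> c2 z1))"
    by (simp only: mult.commute)
  also have "\<dots> =
    (\<Sum>x1\<in>UNIV. \<Sum>x2\<in>UNIV. \<Sum>x3\<in>UNIV. \<Sum>y1\<in>UNIV. \<Sum>y2\<in>UNIV. \<Sum>y3\<in>UNIV.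
      com2 B b' x1 x2 x3 * com2 L h y1 y2 y3 * P x1 y1 * Q x3 y3 *
      (\<Sum>c1\<in>UNIV. hmul B b x2 c1 * \<theta> c1 z2) * (\<Sum>c2\<in>UNIV. hmul L y2 h' c2 * \<psi> c2 z1))"
    unfolding Q_def by (rule gd_mul_expand)
  also have "\<dots> = (\<Sum>x1\<in>UNIV. \<Sum>x2\<in>UNIV. \<Sum>x3\<in>UNIV. \<Sum>y1\<in>UNIV. \<Sum>y2\<in>UNIV. \<Sum>y3\<in>UNIV.
      com2 B b' x1 x2 x3 * com2 L h y1 y2 y3 * P x1 y1 * Q x3 y3 *
      (\<Sum>u\<in>UNIV. \<Sum>Y2\<in>UNIV. \<theta> b u * \<theta> x2 Y2 * hmul L' Y2 u z2) * (\<Sum>X2\<in>UNIV. \<Sum>v\<in>UNIV. \<psi> y2 X2 * \<psi> h' v * hmul B' v X2 z1))"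
    by (simp only: mult_\<theta> mult_\<psi>)
  also have "\<dots> = (\<Sum>x1\<in>UNIV. \<Sum>x2\<in>UNIV. \<Sum>x3\<in>UNIV. \<Sum>y1\<in>UNIV. \<Sum>y2\<in>UNIV. \<Sum>y3\<in>UNIV.
      com2 B b' x1 x2 x3 * com2 L h y1 y2 y3 * (\<Sum>X1\<in>UNIV. \<Sum>Y1\<in>UNIV. \<psi> y1 X1 * \<theta> x1 Y1 * P' X1 Y1) *
      (\<Sum>X3\<in>UNIV. \<Sum>Y3\<in>UNIV. \<psi> y3 X3 * \<theta> x3 Y3 * Q' X3 Y3) *
      (\<Sum>u\<in>UNIV. \<Sum>Y2\<in>UNIV. \<theta> b u * \<theta> x2 Y2 * hmul L' Y2 u z2) * (\<Sum>X2\<in>UNIV. \<Sum>v\<in>UNIV. \<psi> y2 X2 * \<psi> h' v * hmul B' v X2 z1))"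
    by (simp only: P Q pair_pullback_def mat_transpose_def)
  also have "\<dots> = (\<Sum>u\<in>UNIV. \<Sum>v\<in>UNIV. \<Sum>X1\<in>UNIV. \<Sum>X2\<in>UNIV. \<Sum>X3\<in>UNIV. \<Sum>Y1\<in>UNIV. \<Sum>Y2\<in>UNIV. \<Sum>Y3\<in>UNIV.
      \<theta> b u * \<psi> h' v * 
      (\<Sum>y1\<in>UNIV. \<Sum>y2\<in>UNIV. \<Sum>y3\<in>UNIV. com2 L h y1 y2 y3 * \<psi> y1 X1 * \<psi> y2 X2 * \<psi> y3 X3) *
      (\<Sum>x1\<in>UNIV. \<Sum>x2\<in>UNIV. \<Sum>x3\<in>UNIV. com2 B b' x1 x2 x3 * \<theta> x1 Y1 * \<theta> x2 Y2 * \<theta> x3 Y3) *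
      P' X1 Y1 * Q' X3 Y3 * hmul B' v X2 z1 * hmul L' Y2 u z2)"
    apply (simp only: sum_distrib_left sum_distrib_right sum.cartesian_product UNIV_Times_UNIV)
    apply (rule sum.reindex_bij_witness[where i="\<lambda>(u,v,X1,X2,X3,Y1,Y2,Y3,((x1,x2,x3),(y1,y2,y3))). (x1,x2,x3,y1,y2,y3,(X2,v),((u,Y2),((X3,Y3),(X1,Y1))))"
       and j="\<lambda>(x1,x2,x3,y1,y2,y3,(X2,v),((u,Y2),((X3,Y3),(X1,Y1)))). (u,v,X1,X2,X3,Y1,Y2,Y3,((x1,x2,x3),(y1,y2,y3)))"])
    by (auto simp: mult_ac)
  also have "\<dots> = (\<Sum>u\<in>UNIV. \<Sum>v\<in>UNIV. \<Sum>X1\<in>UNIV. \<Sum>X2\<in>UNIV. \<Sum>X3\<in>UNIV. \<Sum>Y1\<in>UNIV. \<Sum>Y2\<in>UNIV. \<Sum>Y3\<in>UNIV.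
      \<theta> b u * \<psi> h' v * 
      (\<Sum>p1\<in>UNIV. \<psi> h p1 * com2 B' p1 X1 X2 X3) * (\<Sum>q2\<in>UNIV. \<theta> b' q2 * com2 L' q2 Y1 Y2 Y3) *
      P' X1 Y1 * Q' X3 Y3 * hmul B' v X2 z1 * hmul L' Y2 u z2)"
    by (simp only: com2_coalg_hom[OF coalg_\<theta>] com2_coalg_hom[OF coalg_\<psi>])
  also have "\<dots> = (\<Sum>p1\<in>UNIV. \<Sum>p2\<in>UNIV. \<Sum>q1\<in>UNIV. \<Sum>q2\<in>UNIV. (\<psi> h p1 * \<theta> b p2) * (\<psi> h' q1 * \<theta> b' q2) * gd_mul B' L' P' (q1,q2) (p1,p2) (z1,z2))"
    unfolding gd_mul_def Q'_def[symmetric] prod.case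
    apply (simp only: sum_distrib_left sum_distrib_right sum.cartesian_product UNIV_Times_UNIV)
    apply (rule sum.reindex_bij_witness[where i="\<lambda>(p1,p2,q1,q2,X1,X2,X3,Y1,Y2,Y3). (p2,q1,X1,X2,X3,Y1,Y2,Y3,q2,p1)"
       and j="\<lambda>(u,v,X1,X2,X3,Y1,Y2,Y3,q2,p1). (p1,u,v,q2,X1,X2,X3,Y1,Y2,Y3)"])
    by (auto simp: mult_ac)
  finally show ?thesis .
qed

lemma coalg_hom_gen_double_tensor:
  assumes "coalg_hom B B' \<theta>" and "coalg_hom L L' \<psi>"
  shows "coalg_hom (gen_double B L P) (gen_double B' L' P') (mat_tensor \<theta> \<psi>)"
proof -
  have comult_\<theta>: "\<And>a x y. (\<Sum>z\<in>UNIV. \<theta> a z * hcom B' z x y) = (\<Sum>c\<in>UNIV. \<Sum>d\<in>UNIV. hcom B a c d * \<theta> c x * \<theta> d y)"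
    and counit_\<theta>: "\<And>a. (\<Sum>z\<in>UNIV. \<theta> a z * hcou B' z) = hcou B a"
    and comult_\<psi>: "\<And>a x y. (\<Sum>z\<in>UNIV. \<psi> a z * hcom L' z x y) = (\<Sum>c\<in>UNIV. \<Sum>d\<in>UNIV. hcom L a c d * \<psi> c x * \<psi> d y)"
    and counit_\<psi>: "\<And>a. (\<Sum>z\<in>UNIV. \<psi> a z * hcou L' z) = hcou L a"
    using assms unfolding coalg_hom_def by blast+
  show ?thesis
    unfolding coalg_hom_def gen_double_simps mat_tensor_def
  proof (intro conjI; simp only: split_paired_All sum_UNIV_prod prod.case; intro allI)
    show "(\<Sum>a\<in>UNIV. \<Sum>b\<in>UNIV. \<theta> c a * \<psi> d b * (hcou B' a * hcou L' b)) = hcou B c * hcou L d" for c d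
      by (simp only: counit_\<theta>[symmetric] counit_\<psi>[symmetric] sum_product) (simp add: mult_ac)
    show "(\<Sum>a\<in>UNIV. \<Sum>b\<in>UNIV. \<theta> u a * \<psi> v b * (hcom B' a x1 x2 * hcom L' b y1 y2)) =
       (\<Sum>c1\<in>UNIV. \<Sum>c2\<in>UNIV. \<Sum>d1\<in>UNIV. \<Sum>d2\<in>UNIV.
          hcom B u c1 d1 * hcom L v c2 d2 * (\<theta> c1 x1 * \<psi> c2 y1) * (\<theta> d1 x2 * \<psi> d2 y2))"
      for u v x1 x2 y1 y2
    proof -
      have "(\<Sum>a\<in>UNIV. \<Sum>b\<in>UNIV. \<theta> u a * \<psi> v b * (hcom B' a x1 x2 * hcom L' b y1 y2)) =
        (\<Sum>a\<in>UNIV. \<theta> u a * hcom B' a x1 x2) * (\<Sum>b\<in>UNIV. \<psi> v b * hcom L' b y1 y2)"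
        by (simp only: sum_product) (simp add: mult_ac)
      also have "\<dots> = (\<Sum>c\<in>UNIV. \<Sum>d\<in>UNIV. hcom B u c d * \<theta> c x1 * \<theta> d x2) *
          (\<Sum>c\<in>UNIV. \<Sum>d\<in>UNIV. hcom L v c d * \<psi> c y1 * \<psi> d y2)"
        by (simp only: comult_\<theta> comult_\<psi>)
      also have "\<dots> = (\<Sum>c1\<in>UNIV. \<Sum>c2\<in>UNIV. \<Sum>d1\<in>UNIV. \<Sum>d2\<in>UNIV.
          hcom B u c1 d1 * hcom L v c2 d2 * (\<theta> c1 x1 * \<psi> c2 y1) * (\<theta> d1 x2 * \<psi> d2 y2))"
        apply (simp only: sum_distrib_left sum_distrib_right sum.cartesian_product UNIV_Times_UNIV)
        apply (rule sum.reindex_bij_witness[where i="\<lambda>(c1,c2,d1,d2). ((c2,d2),(c1,d1))" and j="\<lambda>((cL,dL),(cB,dB)). (cB,cL,dB,dL)"])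
        by (auto simp: mult_ac)
      finally show ?thesis .
    qed
  qed
qed

lemma alg_hom_gen_double_tensor:
  assumes "alg_hom B B' \<theta>" and "alg_hom L L' \<psi>" and "coalg_hom B B' \<theta>" and "coalg_hom L L' \<psi>"
    and pinv: "pinv B L (pair_pullback \<theta> \<psi> P) = pair_pullback \<theta> \<psi> (pinv B' L' P)"
  shows "alg_hom (gen_double B L (pair_pullback \<theta> \<psi> P)) (gen_double B' L' P) (mat_tensor \<theta> \<psi>)"
proof -
  have unit_\<theta>: "\<And>z. (\<Sum>a\<in>UNIV. hone B a * \<theta> a z) = hone B' z"
    and unit_\<psi>: "\<And>z. (\<Sum>a\<in>UNIV. hone L a * \<psi> a z) = hone L' z"
    using assms(1,2) unfolding alg_hom_def by blast+
  show ?thesis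
    unfolding alg_hom_def gen_double_simps mat_tensor_def
  proof (intro conjI; simp only: split_paired_All sum_UNIV_prod prod.case; intro allI)
    show "(\<Sum>a\<in>UNIV. \<Sum>b\<in>UNIV. hone B a * hone L b * (\<theta> a x * \<psi> b y)) = hone B' x * hone L' y" for x y
      by (simp only: unit_\<theta>[symmetric] unit_\<psi>[symmetric] sum_product) (simp add: mult_ac)
  qed (rule gd_mul_tensor[OF assms(1-4) pinv])
qed

lemma gen_double_hom:
  assumes "coalgebra B" "coalgebra L" "coalgebra B'" "coalgebra L'"
    and "alg_hom B B' \<theta>" and "alg_hom L L' \<psi>" and "coalg_hom B B' \<theta>" and "coalg_hom L L' \<psi>"
    and "conv_inverse B' L' P Q"
  shows "hopf_hom (gen_double B L (pair_pullback \<theta> \<psi> P)) (gen_double B' L' P) (mat_tensor \<theta> \<psi>)"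
  unfolding hopf_hom_iff
  using assms by (simp add: alg_hom_gen_double_tensor coalg_hom_gen_double_tensor pinv_pullback)

lemma coalg_hom_gen_double_swap:
  assumes "coalg_hom B L' \<theta>" and "coalg_hom L B' \<psi>"
  shows "coalg_hom (gen_double B L P) (gen_double B' L' P') (mat_swap \<theta> \<psi>)"
proof -
  have comult_\<theta>: "\<And>a x y. (\<Sum>z\<in>UNIV. \<theta> a z * hcom L' z x y) = (\<Sum>c\<in>UNIV. \<Sum>d\<in>UNIV. hcom B a c d * \<theta> c x * \<theta> d y)"
    and counit_\<theta>: "\<And>a. (\<Sum>z\<in>UNIV. \<theta> a z * hcou L' z) = hcou B a"
    and comult_\<psi>: "\<And>a x y. (\<Sum>z\<in>UNIV. \<psi> a z * hcom B' z x y) = (\<Sum>c\<in>UNIV. \<Sum>d\<in>UNIV. hcom L a c d * \<psi> c x * \<psi> d y)"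
    and counit_\<psi>: "\<And>a. (\<Sum>z\<in>UNIV. \<psi> a z * hcou B' z) = hcou L a"
    using assms unfolding coalg_hom_def by blast+
  show ?thesis
    unfolding coalg_hom_def gen_double_simps mat_swap_def
  proof (intro conjI; simp only: split_paired_All sum_UNIV_prod prod.case; intro allI)
    show "(\<Sum>a\<in>UNIV. \<Sum>b\<in>UNIV. \<psi> d a * \<theta> c b * (hcou B' a * hcou L' b)) = hcou B c * hcou L d" for c d
      by (simp only: counit_\<theta>[symmetric] counit_\<psi>[symmetric] sum_product) (subst sum.swap, simp add: mult_ac)
    show "(\<Sum>a\<in>UNIV. \<Sum>b\<in>UNIV. \<psi> v a * \<theta> u b * (hcom B' a x1 x2 * hcom L' b y1 y2)) =
       (\<Sum>c1\<in>UNIV. \<Sum>c2\<in>UNIV. \<Sum>d1\<in>UNIV. \<Sum>d2\<in>UNIV.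
          hcom B u c1 d1 * hcom L v c2 d2 * (\<psi> c2 x1 * \<theta> c1 y1) * (\<psi> d2 x2 * \<theta> d1 y2))"
      for u v x1 x2 y1 y2
    proof -
      have "(\<Sum>a\<in>UNIV. \<Sum>b\<in>UNIV. \<psi> v a * \<theta> u b * (hcom B' a x1 x2 * hcom L' b y1 y2)) =
        (\<Sum>a\<in>UNIV. \<psi> v a * hcom B' a x1 x2) * (\<Sum>b\<in>UNIV. \<theta> u b * hcom L' b y1 y2)"
        by (simp only: sum_product) (simp add: mult_ac)
      also have "\<dots> = (\<Sum>c\<in>UNIV. \<Sum>d\<in>UNIV. hcom L v c d * \<psi> c x1 * \<psi> d x2) *
          (\<Sum>c\<in>UNIV. \<Sum>d\<in>UNIV. hcom B u c d * \<theta> c y1 * \<theta> d y2)"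
        by (simp only: comult_\<theta> comult_\<psi>)
      also have "\<dots> = (\<Sum>c1\<in>UNIV. \<Sum>c2\<in>UNIV. \<Sum>d1\<in>UNIV. \<Sum>d2\<in>UNIV.
          hcom B u c1 d1 * hcom L v c2 d2 * (\<psi> c2 x1 * \<theta> c1 y1) * (\<psi> d2 x2 * \<theta> d1 y2))"
        apply (simp only: sum_distrib_left sum_distrib_right sum.cartesian_product UNIV_Times_UNIV)
        apply (rule sum.reindex_bij_witness[where i="\<lambda>(c1,c2,d1,d2). ((c1,d1),(c2,d2))" and j="\<lambda>((cB,dB),(cL,dL)). (cB,cL,dB,dL)"])
        by (auto simp: mult_ac)
      finally show ?thesis .
    qed
  qed
qed

lemma alg_hom_gen_double_swap:
  assumes "alg_hom B (hop L') \<theta>" and "alg_hom L (hop B') \<psi>" and "coalg_hom B L' \<theta>" and "coalg_hom L B' \<psi>"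
    and pinv: "pinv B L (mat_transpose (pair_pullback \<psi> \<theta> P)) = mat_transpose (pair_pullback \<psi> \<theta> (pinv B' L' P))"
  shows "alg_hom (gen_double B L (mat_transpose (pair_pullback \<psi> \<theta> P))) (hop (gen_double B' L' P)) (mat_swap \<theta> \<psi>)"
proof -
  have unit_\<theta>: "\<And>z. (\<Sum>a\<in>UNIV. hone B a * \<theta> a z) = hone L' z"
    and unit_\<psi>: "\<And>z. (\<Sum>a\<in>UNIV. hone L a * \<psi> a z) = hone B' z"
    using assms(1,2) unfolding alg_hom_def hop_simps by blast+
  show ?thesis
    unfolding alg_hom_def gen_double_simps hop_simps mat_swap_def
  proof (intro conjI; simp only: split_paired_All sum_UNIV_prod prod.case; intro allI)
    show "(\<Sum>a\<in>UNIV. \<Sum>b\<in>UNIV. hone B a * hone L b * (\<psi> b x * \<theta> a y)) = hone B' x * hone L' y" for x y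
      by (simp only: unit_\<theta>[symmetric] unit_\<psi>[symmetric] sum_product) (subst sum.swap, simp add: mult_ac)
  qed (rule gd_mul_swap[OF assms(1-4) pinv])
qed

lemma gen_double_swap_hom:
  assumes "coalgebra B" "coalgebra L" "coalgebra B'" "coalgebra L'"
    and "alg_hom B (hop L') \<theta>" and "alg_hom L (hop B') \<psi>" and "coalg_hom B L' \<theta>" and "coalg_hom L B' \<psi>"
    and "conv_inverse B' L' P Q"
  shows "hopf_hom (gen_double B L (mat_transpose (pair_pullback \<psi> \<theta> P))) (hop (gen_double B' L' P)) (mat_swap \<theta> \<psi>)"
proof -
  have "conv_inverse L B (pair_pullback \<psi> \<theta> P) (pair_pullback \<psi> \<theta> Q)"
    using assms(8,7,9) by (rule conv_inverse_pullback)
  hence "pinv B L (mat_transpose (pair_pullback \<psi> \<theta> P)) = mat_transpose (pair_pullback \<psi> \<theta> (pinv B' L' P))"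
    using assms(1-4,7-9) by (simp add: pinv_transpose pinv_pullback)
  thus ?thesis
    unfolding hopf_hom_iff using assms(5-8) by (simp add: alg_hom_gen_double_swap coalg_hom_gen_double_swap)
qed

lemma hopf_isoI:
  assumes "hopf_hom A B \<phi>" and "mat_mult \<phi> \<psi> = kd" and "mat_mult \<psi> \<phi> = kd"
  shows "hopf_iso A B"
  unfolding hopf_iso_def
  using assms(1) mat_mult_kd_apply[OF assms(2)] mat_mult_kd_apply[OF assms(3)] by blast

section \<open>The quasitriangular structure\<close>

definition dual_mult :: "('i::finite, 'k::field) hopf \<Rightarrow> ('i \<Rightarrow> 'k) \<Rightarrow> ('i \<Rightarrow> 'k) \<Rightarrow> 'i \<Rightarrow> 'k" where
  "dual_mult H p p' = (\<lambda>a. \<Sum>x\<in>UNIV. \<Sum>y\<in>UNIV. hcom H a x y * p x * p' y)"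

lemma rvec_apply: "rvec R p j = (\<Sum>a\<in>UNIV. R a j * p a)"
  unfolding rvec_def sigma_def by (simp add: kd_simps)

lemma lvec_apply: "lvec R q i = (\<Sum>b\<in>UNIV. R i b * q b)"
proof -
  have "sigma R (\<lambda>a. kd i a) q = (\<Sum>a\<in>UNIV. kd i a * (\<Sum>b\<in>UNIV. R a b * q b))"
    unfolding sigma_def by (simp add: sum_distrib_left mult_ac)
  thus ?thesis unfolding lvec_def by simp
qed

lemma sigma_eq_rvec: "sigma R p q = (\<Sum>j\<in>UNIV. rvec R p j * q j)"
  unfolding sigma_def rvec_apply
  by (simp only: sum_distrib_left sum_distrib_right mult_ac) (rule sum.swap)

lemma sigma_eq_lvec: "sigma R p q = (\<Sum>i\<in>UNIV. p i * lvec R q i)"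
  unfolding sigma_def lvec_apply
  by (simp only: sum_distrib_left sum_distrib_right mult_ac)

context
  fixes H :: "('i::finite, 'k::field) hopf" and R :: "'i \<Rightarrow> 'i \<Rightarrow> 'k"
  assumes H: "hopf_alg H" and quasi: "quasitriangular H R"
begin

lemma R_comult_first: "(\<Sum>a\<in>UNIV. R a z * hcom H a x y) = (\<Sum>b\<in>UNIV. \<Sum>d\<in>UNIV. R x b * R y d * hmul H b d z)"
  using quasi unfolding quasitriangular_def by blast
lemma R_comult_second: "(\<Sum>a\<in>UNIV. R x a * hcom H a y z) = (\<Sum>a\<in>UNIV. \<Sum>c\<in>UNIV. R a z * R c y * hmul H a c x)"
  using quasi unfolding quasitriangular_def by blast

lemma rvec_dual_mult: "rvec R (dual_mult H p p') j = (\<Sum>b\<in>UNIV. \<Sum>d\<in>UNIV. rvec R p b * rvec R p' d * hmul H b d j)"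
proof -
  have "rvec R (dual_mult H p p') j = (\<Sum>x\<in>UNIV. \<Sum>y\<in>UNIV. p x * p' y * (\<Sum>a\<in>UNIV. R a j * hcom H a x y))"
    unfolding rvec_apply dual_mult_def
    apply (simp only: sum_distrib_left sum_distrib_right sum.cartesian_product UNIV_Times_UNIV)
    apply (rule sum.reindex_bij_witness[where i="\<lambda>(x,y,a). (a,(x,y))" and j="\<lambda>(a,(x,y)). (x,y,a)"])
    by (auto simp: mult_ac)
  also have "\<dots> = (\<Sum>x\<in>UNIV. \<Sum>y\<in>UNIV. p x * p' y * (\<Sum>b\<in>UNIV. \<Sum>d\<in>UNIV. R x b * R y d * hmul H b d j))"
    by (simp only: R_comult_first)
  also have "\<dots> = (\<Sum>b\<in>UNIV. \<Sum>d\<in>UNIV. rvec R p b * rvec R p' d * hmul H b d j)"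
    unfolding rvec_apply
    apply (simp only: sum_distrib_left sum_distrib_right sum.cartesian_product UNIV_Times_UNIV)
    apply (rule sum.reindex_bij_witness[where i="\<lambda>(b,d,(y,x)). (x,y,(b,d))" and j="\<lambda>(x,y,(b,d)). (b,d,(y,x))"])
    by (auto simp: mult_ac)
  finally show ?thesis .
qed

lemma lvec_dual_mult: "(\<Sum>x\<in>UNIV. \<Sum>y\<in>UNIV. lvec R q x * lvec R q' y * hmul H x y i) = lvec R (dual_mult H q' q) i"
proof -
  have "lvec R (dual_mult H q' q) i = (\<Sum>y\<in>UNIV. \<Sum>z\<in>UNIV. q' y * q z * (\<Sum>b\<in>UNIV. R i b * hcom H b y z))"
    unfolding lvec_apply dual_mult_def
    apply (simp only: sum_distrib_left sum_distrib_right sum.cartesian_product UNIV_Times_UNIV)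
    apply (rule sum.reindex_bij_witness[where i="\<lambda>(y,z,b). (b,(y,z))" and j="\<lambda>(b,(y,z)). (y,z,b)"])
    by (auto simp: mult_ac)
  also have "\<dots> = (\<Sum>y\<in>UNIV. \<Sum>z\<in>UNIV. q' y * q z * (\<Sum>a\<in>UNIV. \<Sum>c\<in>UNIV. R a z * R c y * hmul H a c i))"
    by (simp only: R_comult_second)
  also have "\<dots> = (\<Sum>x\<in>UNIV. \<Sum>y\<in>UNIV. lvec R q x * lvec R q' y * hmul H x y i)"
    unfolding lvec_apply
    apply (simp only: sum_distrib_left sum_distrib_right sum.cartesian_product UNIV_Times_UNIV)
    apply (rule sum.reindex_bij_witness[where i="\<lambda>(x,y2,(n,na)). (n,na,(x,y2))" and j="\<lambda>(y,z,(a,c)). (a,c,(y,z))"])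
    by (auto simp: mult_ac)
  finally show ?thesis ..
qed

lemma H_mult_assoc: "(\<Sum>e\<in>UNIV. hmul H a b e * hmul H e c d) = (\<Sum>e\<in>UNIV. hmul H b c e * hmul H a e d)"
  using H unfolding hopf_alg_def by (elim conjE) blast
lemma H_unit_left: "(\<Sum>e\<in>UNIV. hone H e * hmul H e a c) = kd a c"
  using H unfolding hopf_alg_def by (elim conjE) blast
lemma H_unit_right: "(\<Sum>e\<in>UNIV. hone H e * hmul H a e c) = kd a c"
  using H unfolding hopf_alg_def by (elim conjE) blast
lemma H_counit_left: "(\<Sum>e\<in>UNIV. hcom H a e b * hcou H e) = kd a b"
  using H unfolding hopf_alg_def by (elim conjE) blast
lemma H_counit_right: "(\<Sum>e\<in>UNIV. hcom H a b e * hcou H e) = kd a b"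
  using H unfolding hopf_alg_def by (elim conjE) blast
lemma H_unit_counit: "(\<Sum>c\<in>UNIV. hone H c * hcou H c) = 1"
  using H unfolding hopf_alg_def by (elim conjE) blast
lemmas H_unit_counit_simps = H_unit_left H_unit_right H_counit_left H_counit_right

lemma hone_nonzero: "\<exists>x. hone H x \<noteq> 0"
proof (rule ccontr)
  assume "\<nexists>x. hone H x \<noteq> 0"
  hence "(\<Sum>c\<in>UNIV. hone H c * hcou H c) = 0" by simp
  thus False using H_unit_counit by simp
qed

lemma R_invertible: "\<exists>R'. \<forall>x y.
       (\<Sum>a\<in>UNIV. \<Sum>b\<in>UNIV. \<Sum>a'\<in>UNIV. \<Sum>b'\<in>UNIV. R a b * R' a' b' * hmul H a a' x * hmul H b b' y)
          = hone H x * hone H y"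
  using quasi unfolding quasitriangular_def by (elim conjE exE) meson

lemma R_eq_rvec_counit_mult: "R y z = (\<Sum>b\<in>UNIV. \<Sum>d\<in>UNIV. rvec R (hcou H) b * R y d * hmul H b d z)"
proof -
  have "R y z = (\<Sum>x\<in>UNIV. hcou H x * (\<Sum>a\<in>UNIV. R a z * hcom H a x y))"
proof -
    have "(\<Sum>x\<in>UNIV. hcou H x * (\<Sum>a\<in>UNIV. R a z * hcom H a x y)) = (\<Sum>a\<in>UNIV. R a z * (\<Sum>x\<in>UNIV. hcom H a x y * hcou H x))"
      by (simp only: sum_distrib_left mult_ac) (rule sum.swap)
    thus ?thesis by (simp add: H_unit_counit_simps)
  qed
  also have "\<dots> = (\<Sum>x\<in>UNIV. hcou H x * (\<Sum>b\<in>UNIV. \<Sum>d\<in>UNIV. R x b * R y d * hmul H b d z))"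
    by (simp only: R_comult_first)
  also have "\<dots> = (\<Sum>b\<in>UNIV. \<Sum>d\<in>UNIV. rvec R (hcou H) b * R y d * hmul H b d z)"
    unfolding rvec_apply
    apply (simp only: sum_distrib_left sum_distrib_right sum.cartesian_product UNIV_Times_UNIV)
    apply (rule sum.reindex_bij_witness[where i="\<lambda>(b,d,x). (x,(b,d))" and j="\<lambda>(x,(b,d)). (b,d,x)"])
    by (auto simp: mult_ac)
  finally show ?thesis .
qed

text \<open>With \<open>u = (\<epsilon> \<otimes> id) R\<close>, the previous lemma says \<open>R = (1 \<otimes> u) R\<close>; multiplying by
\<open>R\<^sup>-\<^sup>1\<close> on the right gives \<open>u = 1\<close>.\<close>

lemma rvec_counit: "rvec R (hcou H) = hone H"
proof -
  obtain R' where R_inv: "\<And>x y. (\<Sum>a\<in>UNIV. \<Sum>b\<in>UNIV. \<Sum>a'\<in>UNIV. \<Sum>b'\<in>UNIV. R a b * R' a' b' * hmul H a a' x * hmul H b b' y)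
          = hone H x * hone H y" using R_invertible by blast
  define u where "u = rvec R (hcou H)"
  have R_eq: "\<And>y z. (\<Sum>b\<in>UNIV. \<Sum>d\<in>UNIV. u b * R y d * hmul H b d z) = R y z" unfolding u_def by (rule R_eq_rvec_counit_mult[symmetric])
  have key: "hone H x * hone H y = hone H x * u y" for x y
proof -
    have "hone H x * hone H y = (\<Sum>a\<in>UNIV. \<Sum>b\<in>UNIV. \<Sum>a'\<in>UNIV. \<Sum>b'\<in>UNIV.
        (\<Sum>b0\<in>UNIV. \<Sum>d\<in>UNIV. u b0 * R a d * hmul H b0 d b) * R' a' b' * hmul H a a' x * hmul H b b' y)"
      by (simp only: R_eq R_inv)
    also have "\<dots> = (\<Sum>a\<in>UNIV. \<Sum>a'\<in>UNIV. \<Sum>b'\<in>UNIV. \<Sum>b0\<in>UNIV. \<Sum>d\<in>UNIV.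
        u b0 * R a d * R' a' b' * hmul H a a' x * (\<Sum>b\<in>UNIV. hmul H b0 d b * hmul H b b' y))"
      apply (simp only: sum_distrib_left sum_distrib_right sum.cartesian_product UNIV_Times_UNIV)
      apply (rule sum.reindex_bij_witness[where i="\<lambda>(a,a',b',b0,d,b). (a,b,a',b',(b0,d))" and j="\<lambda>(a,b,a',b',(b0,d)). (a,a',b',b0,d,b)"])
      by (auto simp: mult_ac)
    also have "\<dots> = (\<Sum>a\<in>UNIV. \<Sum>a'\<in>UNIV. \<Sum>b'\<in>UNIV. \<Sum>b0\<in>UNIV. \<Sum>d\<in>UNIV.
        u b0 * R a d * R' a' b' * hmul H a a' x * (\<Sum>e\<in>UNIV. hmul H d b' e * hmul H b0 e y))"
      by (simp only: H_mult_assoc)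
    also have "\<dots> = (\<Sum>b0\<in>UNIV. \<Sum>e\<in>UNIV. u b0 * hmul H b0 e y *
        (\<Sum>a\<in>UNIV. \<Sum>d\<in>UNIV. \<Sum>a'\<in>UNIV. \<Sum>b'\<in>UNIV. R a d * R' a' b' * hmul H a a' x * hmul H d b' e))"
      apply (simp only: sum_distrib_left sum_distrib_right sum.cartesian_product UNIV_Times_UNIV)
      apply (rule sum.reindex_bij_witness[where i="\<lambda>(b0,e,a,d,a',b'). (a,a',b',b0,d,e)" and j="\<lambda>(a,a',b',b0,d,e). (b0,e,a,d,a',b')"])
      by (auto simp: mult_ac)
    also have "\<dots> = (\<Sum>b0\<in>UNIV. \<Sum>e\<in>UNIV. u b0 * hmul H b0 e y * (hone H x * hone H e))"
      by (simp only: R_inv)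
    also have "\<dots> = hone H x * (\<Sum>b0\<in>UNIV. u b0 * (\<Sum>e\<in>UNIV. hone H e * hmul H b0 e y))"
      by (simp add: sum_distrib_left mult_ac)
    also have "\<dots> = hone H x * u y" by (simp add: H_unit_counit_simps)
    finally show ?thesis .
  qed
  obtain x where "hone H x \<noteq> 0" using hone_nonzero by blast
  with key have "hone H y = u y" for y by (metis mult_left_cancel)
  thus ?thesis unfolding u_def by auto
qed

lemma R_eq_lvec_counit_mult: "R x y = (\<Sum>a\<in>UNIV. \<Sum>c\<in>UNIV. lvec R (hcou H) a * R c y * hmul H a c x)"
proof -
  have "R x y = (\<Sum>z\<in>UNIV. hcou H z * (\<Sum>a\<in>UNIV. R x a * hcom H a y z))"
proof -
    have "(\<Sum>z\<in>UNIV. hcou H z * (\<Sum>a\<in>UNIV. R x a * hcom H a y z)) = (\<Sum>a\<in>UNIV. R x a * (\<Sum>z\<in>UNIV. hcom H a y z * hcou H z))"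
      by (simp only: sum_distrib_left mult_ac) (rule sum.swap)
    thus ?thesis by (simp add: H_unit_counit_simps)
  qed
  also have "\<dots> = (\<Sum>z\<in>UNIV. hcou H z * (\<Sum>a\<in>UNIV. \<Sum>c\<in>UNIV. R a z * R c y * hmul H a c x))"
    by (simp only: R_comult_second)
  also have "\<dots> = (\<Sum>a\<in>UNIV. \<Sum>c\<in>UNIV. lvec R (hcou H) a * R c y * hmul H a c x)"
    unfolding lvec_apply
    apply (simp only: sum_distrib_left sum_distrib_right sum.cartesian_product UNIV_Times_UNIV)
    apply (rule sum.reindex_bij_witness[where i="\<lambda>(b,d,x). (x,(b,d))" and j="\<lambda>(x,(b,d)). (b,d,x)"])
    by (auto simp: mult_ac)
  finally show ?thesis .
qed

lemma lvec_counit: "lvec R (hcou H) = hone H"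
proof -
  obtain R' where R_inv: "\<And>x y. (\<Sum>a\<in>UNIV. \<Sum>b\<in>UNIV. \<Sum>a'\<in>UNIV. \<Sum>b'\<in>UNIV. R a b * R' a' b' * hmul H a a' x * hmul H b b' y)
          = hone H x * hone H y" using R_invertible by blast
  define w where "w = lvec R (hcou H)"
  have R_eq: "\<And>x y. (\<Sum>a\<in>UNIV. \<Sum>c\<in>UNIV. w a * R c y * hmul H a c x) = R x y" unfolding w_def by (rule R_eq_lvec_counit_mult[symmetric])
  have key: "hone H x * hone H y = w x * hone H y" for x y
proof -
    have "hone H x * hone H y = (\<Sum>a\<in>UNIV. \<Sum>b\<in>UNIV. \<Sum>a'\<in>UNIV. \<Sum>b'\<in>UNIV.
        (\<Sum>a0\<in>UNIV. \<Sum>c\<in>UNIV. w a0 * R c b * hmul H a0 c a) * R' a' b' * hmul H a a' x * hmul H b b' y)"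
      by (simp only: R_eq R_inv)
    also have "\<dots> = (\<Sum>b\<in>UNIV. \<Sum>a'\<in>UNIV. \<Sum>b'\<in>UNIV. \<Sum>a0\<in>UNIV. \<Sum>c\<in>UNIV.
        w a0 * R c b * R' a' b' * hmul H b b' y * (\<Sum>a\<in>UNIV. hmul H a0 c a * hmul H a a' x))"
      apply (simp only: sum_distrib_left sum_distrib_right sum.cartesian_product UNIV_Times_UNIV)
      apply (rule sum.reindex_bij_witness[where i="\<lambda>(b,a',b',a0,c,a). (a,b,a',b',(a0,c))" and j="\<lambda>(a,b,a',b',(a0,c)). (b,a',b',a0,c,a)"])
      by (auto simp: mult_ac)
    also have "\<dots> = (\<Sum>b\<in>UNIV. \<Sum>a'\<in>UNIV. \<Sum>b'\<in>UNIV. \<Sum>a0\<in>UNIV. \<Sum>c\<in>UNIV.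
        w a0 * R c b * R' a' b' * hmul H b b' y * (\<Sum>e\<in>UNIV. hmul H c a' e * hmul H a0 e x))"
      by (simp only: H_mult_assoc)
    also have "\<dots> = (\<Sum>a0\<in>UNIV. \<Sum>e\<in>UNIV. w a0 * hmul H a0 e x *
        (\<Sum>c\<in>UNIV. \<Sum>b\<in>UNIV. \<Sum>a'\<in>UNIV. \<Sum>b'\<in>UNIV. R c b * R' a' b' * hmul H c a' e * hmul H b b' y))"
      apply (simp only: sum_distrib_left sum_distrib_right sum.cartesian_product UNIV_Times_UNIV)
      apply (rule sum.reindex_bij_witness[where i="\<lambda>(a0,e,c,b,a',b'). (b,a',b',a0,c,e)" and j="\<lambda>(b,a',b',a0,c,e). (a0,e,c,b,a',b')"])
      by (auto simp: mult_ac)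
    also have "\<dots> = (\<Sum>a0\<in>UNIV. \<Sum>e\<in>UNIV. w a0 * hmul H a0 e x * (hone H e * hone H y))"
      by (simp only: R_inv)
    also have "\<dots> = hone H y * (\<Sum>a0\<in>UNIV. w a0 * (\<Sum>e\<in>UNIV. hone H e * hmul H a0 e x))"
      by (simp add: sum_distrib_left mult_ac)
    also have "\<dots> = w x * hone H y" by (simp add: H_unit_counit_simps)
    finally show ?thesis .
  qed
  obtain y where "hone H y \<noteq> 0" using hone_nonzero by blast
  with key have "hone H x = w x" for x by (metis mult_right_cancel)
  thus ?thesis unfolding w_def by auto
qed

end

section \<open>The pairing between $H^*_r$ and $H^*_l$\<close>

locale sigma_pairing =
  fixes H :: "('i::finite, 'k::field) hopf" and R :: "'i \<Rightarrow> 'i \<Rightarrow> 'k"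
    and Hr :: "('b::finite, 'k) hopf" and \<iota>r :: "'b \<Rightarrow> 'i \<Rightarrow> 'k"
    and Hl :: "('l::finite, 'k) hopf" and \<iota>l :: "'l \<Rightarrow> 'i \<Rightarrow> 'k"
    and P :: "'b \<Rightarrow> 'l \<Rightarrow> 'k"
  assumes H: "hopf_alg H" and quasi: "quasitriangular H R"
    and Hr: "hopf_alg Hr" and hom_r: "hopf_hom Hr (hdual (hdual H)) \<iota>r" and inj_r: "lin_inj \<iota>r"
    and range_r: "range (linext \<iota>r) = range (rvec R)"
    and Hl: "hopf_alg Hl" and hom_l: "hopf_hom Hl (hdual (hdual H)) \<iota>l" and inj_l: "lin_inj \<iota>l"
    and range_l: "range (linext \<iota>l) = range (lvec R)"
    and pairing: "\<forall>c d p q. linext \<iota>r c = rvec R p \<longrightarrow> linext \<iota>l d = lvec R q \<longrightarrow>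
           (\<Sum>b\<in>UNIV. \<Sum>h\<in>UNIV. c b * d h * P b h) = sigma R p q"
begin

lemma \<iota>r_mult: "(\<Sum>c\<in>UNIV. hmul Hr a b c * \<iota>r c z) = (\<Sum>x\<in>UNIV. \<Sum>y\<in>UNIV. \<iota>r a x * \<iota>r b y * hmul H x y z)"
  using hom_r unfolding hopf_hom_def hdual_hdual by blast
lemma \<iota>r_unit: "(\<Sum>a\<in>UNIV. hone Hr a * \<iota>r a z) = hone H z"
  using hom_r unfolding hopf_hom_def hdual_hdual by blast
lemma \<iota>r_comult: "(\<Sum>z\<in>UNIV. \<iota>r a z * hcom H z x y) = (\<Sum>c\<in>UNIV. \<Sum>d\<in>UNIV. hcom Hr a c d * \<iota>r c x * \<iota>r d y)"
  using hom_r unfolding hopf_hom_def hdual_hdual by blast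
lemma \<iota>r_counit: "(\<Sum>z\<in>UNIV. \<iota>r a z * hcou H z) = hcou Hr a"
  using hom_r unfolding hopf_hom_def hdual_hdual by blast
lemma \<iota>l_mult: "(\<Sum>c\<in>UNIV. hmul Hl a b c * \<iota>l c z) = (\<Sum>x\<in>UNIV. \<Sum>y\<in>UNIV. \<iota>l a x * \<iota>l b y * hmul H x y z)"
  using hom_l unfolding hopf_hom_def hdual_hdual by blast
lemma \<iota>l_unit: "(\<Sum>a\<in>UNIV. hone Hl a * \<iota>l a z) = hone H z"
  using hom_l unfolding hopf_hom_def hdual_hdual by blast
lemma \<iota>l_comult: "(\<Sum>z\<in>UNIV. \<iota>l a z * hcom H z x y) = (\<Sum>c\<in>UNIV. \<Sum>d\<in>UNIV. hcom Hl a c d * \<iota>l c x * \<iota>l d y)"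
  using hom_l unfolding hopf_hom_def hdual_hdual by blast
lemma \<iota>l_counit: "(\<Sum>z\<in>UNIV. \<iota>l a z * hcou H z) = hcou Hl a"
  using hom_l unfolding hopf_hom_def hdual_hdual by blast

lemma ex_rvec_preimage: "\<exists>p. \<iota>r b = rvec R p"
proof -
  have "linext \<iota>r (kd b) \<in> range (rvec R)"
    using range_r by blast
  thus ?thesis by auto
qed
lemma ex_lvec_preimage: "\<exists>q. \<iota>l h = lvec R q"
proof -
  have "linext \<iota>l (kd h) \<in> range (lvec R)"
    using range_l by blast
  thus ?thesis by auto
qed

definition rvec_preimage :: "'b \<Rightarrow> 'i \<Rightarrow> 'k" where "rvec_preimage b = (SOME p. \<iota>r b = rvec R p)"
definition lvec_preimage :: "'l \<Rightarrow> 'i \<Rightarrow> 'k" where "lvec_preimage h = (SOME q. \<iota>l h = lvec R q)"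

lemma \<iota>r_eq_rvec: "\<iota>r b = rvec R (rvec_preimage b)" unfolding rvec_preimage_def using ex_rvec_preimage by (rule someI_ex)
lemma \<iota>l_eq_lvec: "\<iota>l h = lvec R (lvec_preimage h)" unfolding lvec_preimage_def using ex_lvec_preimage by (rule someI_ex)

lemma P_sigma: "linext \<iota>r c = rvec R p \<Longrightarrow> linext \<iota>l d = lvec R q \<Longrightarrow>
           (\<Sum>b\<in>UNIV. \<Sum>h\<in>UNIV. c b * d h * P b h) = sigma R p q"
  using pairing by blast

lemma P_eq_sigma: "P b h = sigma R (rvec_preimage b) (lvec_preimage h)"
proof -
  have "(\<Sum>b'\<in>UNIV. \<Sum>h'\<in>UNIV. kd b b' * kd h h' * P b' h') = sigma R (rvec_preimage b) (lvec_preimage h)"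
    by (rule P_sigma) (simp_all add: linext_kd \<iota>r_eq_rvec[symmetric] \<iota>l_eq_lvec[symmetric])
  thus ?thesis by (simp add: kd_simps)
qed

lemma P_eq_lvec: "P b h = (\<Sum>i\<in>UNIV. rvec_preimage b i * \<iota>l h i)"
  unfolding P_eq_sigma sigma_eq_lvec \<iota>l_eq_lvec[symmetric] ..
lemma P_eq_rvec: "P b h = (\<Sum>j\<in>UNIV. \<iota>r b j * lvec_preimage h j)"
  unfolding P_eq_sigma sigma_eq_rvec \<iota>r_eq_rvec[symmetric] ..

lemma P_mult_left: "(\<Sum>c\<in>UNIV. hmul Hr b b' c * P c h) = (\<Sum>h1\<in>UNIV. \<Sum>h2\<in>UNIV. hcom Hl h h1 h2 * P b h1 * P b' h2)"
proof -
  have lin: "linext \<iota>r (\<lambda>c. hmul Hr b b' c) = rvec R (dual_mult H (rvec_preimage b) (rvec_preimage b'))"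
    unfolding linext_def by (simp add: fun_eq_iff \<iota>r_mult rvec_dual_mult[OF H quasi] flip: \<iota>r_eq_rvec)
  have "(\<Sum>c\<in>UNIV. hmul Hr b b' c * P c h) = (\<Sum>c\<in>UNIV. \<Sum>h'\<in>UNIV. hmul Hr b b' c * kd h h' * P c h')"
    by (simp add: kd_simps)
  also have "\<dots> = sigma R (dual_mult H (rvec_preimage b) (rvec_preimage b')) (lvec_preimage h)"
    by (rule P_sigma[OF lin]) (simp add: linext_kd \<iota>l_eq_lvec[symmetric])
  also have "\<dots> = (\<Sum>i\<in>UNIV. dual_mult H (rvec_preimage b) (rvec_preimage b') i * \<iota>l h i)"
    unfolding sigma_eq_lvec \<iota>l_eq_lvec[symmetric] ..
  also have "\<dots> = (\<Sum>x\<in>UNIV. \<Sum>y\<in>UNIV. rvec_preimage b x * rvec_preimage b' y * (\<Sum>i\<in>UNIV. \<iota>l h i * hcom H i x y))"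
    unfolding dual_mult_def
    apply (simp only: sum_distrib_left sum_distrib_right sum.cartesian_product UNIV_Times_UNIV)
    apply (rule sum.reindex_bij_witness[where i="\<lambda>(x,y,i). (i,(x,y))" and j="\<lambda>(i,(x,y)). (x,y,i)"])
    by (auto simp: mult_ac)
  also have "\<dots> = (\<Sum>x\<in>UNIV. \<Sum>y\<in>UNIV. rvec_preimage b x * rvec_preimage b' y * (\<Sum>h1\<in>UNIV. \<Sum>h2\<in>UNIV. hcom Hl h h1 h2 * \<iota>l h1 x * \<iota>l h2 y))"
    by (simp only: \<iota>l_comult)
  also have "\<dots> = (\<Sum>h1\<in>UNIV. \<Sum>h2\<in>UNIV. hcom Hl h h1 h2 * (\<Sum>i\<in>UNIV. rvec_preimage b i * \<iota>l h1 i) * (\<Sum>i\<in>UNIV. rvec_preimage b' i * \<iota>l h2 i))"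
    apply (simp only: sum_distrib_left sum_distrib_right sum.cartesian_product UNIV_Times_UNIV)
    apply (rule sum.reindex_bij_witness[where i="\<lambda>(h1,h2,y,x). (x,y,(h1,h2))" and j="\<lambda>(x,y,(h1,h2)). (h1,h2,y,x)"])
    by (auto simp: mult_ac)
  finally show ?thesis by (simp only: P_eq_lvec[symmetric])
qed

lemma P_mult_right: "(\<Sum>c\<in>UNIV. hmul Hl h h' c * P b c) = (\<Sum>b1\<in>UNIV. \<Sum>b2\<in>UNIV. hcom Hr b b1 b2 * P b2 h * P b1 h')"
proof -
  have lin: "linext \<iota>l (\<lambda>c. hmul Hl h h' c) = lvec R (dual_mult H (lvec_preimage h') (lvec_preimage h))"
    unfolding linext_def by (simp add: fun_eq_iff \<iota>l_mult lvec_dual_mult[OF H quasi, symmetric] flip: \<iota>l_eq_lvec)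
  have "(\<Sum>c\<in>UNIV. hmul Hl h h' c * P b c) = (\<Sum>b''\<in>UNIV. kd b b'' * (\<Sum>c\<in>UNIV. hmul Hl h h' c * P b'' c))"
    by (simp add: kd_simps)
  also have "\<dots> = (\<Sum>b''\<in>UNIV. \<Sum>c\<in>UNIV. kd b b'' * hmul Hl h h' c * P b'' c)"
    by (simp add: sum_distrib_left mult.assoc)
  also have "\<dots> = sigma R (rvec_preimage b) (dual_mult H (lvec_preimage h') (lvec_preimage h))"
    by (rule P_sigma[OF _ lin]) (simp add: linext_kd \<iota>r_eq_rvec[symmetric])
  also have "\<dots> = (\<Sum>j\<in>UNIV. \<iota>r b j * dual_mult H (lvec_preimage h') (lvec_preimage h) j)"
    unfolding sigma_eq_rvec \<iota>r_eq_rvec[symmetric] ..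
  also have "\<dots> = (\<Sum>x\<in>UNIV. \<Sum>y\<in>UNIV. lvec_preimage h' x * lvec_preimage h y * (\<Sum>j\<in>UNIV. \<iota>r b j * hcom H j x y))"
    unfolding dual_mult_def
    apply (simp only: sum_distrib_left sum_distrib_right sum.cartesian_product UNIV_Times_UNIV)
    apply (rule sum.reindex_bij_witness[where i="\<lambda>(x,y,i). (i,(x,y))" and j="\<lambda>(i,(x,y)). (x,y,i)"])
    by (auto simp: mult_ac)
  also have "\<dots> = (\<Sum>x\<in>UNIV. \<Sum>y\<in>UNIV. lvec_preimage h' x * lvec_preimage h y * (\<Sum>b1\<in>UNIV. \<Sum>b2\<in>UNIV. hcom Hr b b1 b2 * \<iota>r b1 x * \<iota>r b2 y))"
    by (simp only: \<iota>r_comult)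
  also have "\<dots> = (\<Sum>b1\<in>UNIV. \<Sum>b2\<in>UNIV. hcom Hr b b1 b2 * (\<Sum>j\<in>UNIV. \<iota>r b2 j * lvec_preimage h j) * (\<Sum>j\<in>UNIV. \<iota>r b1 j * lvec_preimage h' j))"
    apply (simp only: sum_distrib_left sum_distrib_right sum.cartesian_product UNIV_Times_UNIV)
    apply (rule sum.reindex_bij_witness[where i="\<lambda>(b1,b2,x,y). (x,y,(b1,b2))" and j="\<lambda>(x,y,(b1,b2)). (b1,b2,x,y)"])
    by (auto simp: mult_ac)
  finally show ?thesis by (simp only: P_eq_rvec[symmetric])
qed

lemma P_unit_left: "(\<Sum>c\<in>UNIV. hone Hr c * P c h) = hcou Hl h"
proof -
  have lin: "linext \<iota>r (hone Hr) = rvec R (hcou H)"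
    unfolding linext_def by (simp add: fun_eq_iff \<iota>r_unit rvec_counit[OF H quasi])
  have "(\<Sum>c\<in>UNIV. hone Hr c * P c h) = (\<Sum>c\<in>UNIV. \<Sum>h'\<in>UNIV. hone Hr c * kd h h' * P c h')"
    by (simp add: kd_simps)
  also have "\<dots> = sigma R (hcou H) (lvec_preimage h)"
    by (rule P_sigma[OF lin]) (simp add: linext_kd \<iota>l_eq_lvec[symmetric])
  also have "\<dots> = (\<Sum>i\<in>UNIV. \<iota>l h i * hcou H i)"
    unfolding sigma_eq_lvec \<iota>l_eq_lvec[symmetric] by (simp add: mult.commute)
  finally show ?thesis by (simp add: \<iota>l_counit)
qed

lemma P_unit_right: "(\<Sum>h\<in>UNIV. hone Hl h * P b h) = hcou Hr b"
proof -
  have lin: "linext \<iota>l (hone Hl) = lvec R (hcou H)"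
    unfolding linext_def by (simp add: fun_eq_iff \<iota>l_unit lvec_counit[OF H quasi])
  have "(\<Sum>h\<in>UNIV. hone Hl h * P b h) = (\<Sum>b'\<in>UNIV. kd b b' * (\<Sum>h\<in>UNIV. hone Hl h * P b' h))"
    by (simp add: kd_simps)
  also have "\<dots> = (\<Sum>b'\<in>UNIV. \<Sum>h\<in>UNIV. kd b b' * hone Hl h * P b' h)"
    by (simp add: sum_distrib_left mult.assoc)
  also have "\<dots> = sigma R (rvec_preimage b) (hcou H)"
    by (rule P_sigma[OF _ lin]) (simp add: linext_kd \<iota>r_eq_rvec[symmetric])
  also have "\<dots> = (\<Sum>j\<in>UNIV. \<iota>r b j * hcou H j)"
    unfolding sigma_eq_rvec \<iota>r_eq_rvec[symmetric] ..
  finally show ?thesis by (simp add: \<iota>r_counit)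
qed

lemma lin_inj_P: "lin_inj P"
  unfolding lin_inj_def
proof (intro allI impI)
  fix c assume "linext P c = (\<lambda>_. 0)"
  hence c0: "\<And>h. (\<Sum>b\<in>UNIV. c b * P b h) = 0"
    unfolding linext_def by metis
  obtain p where p: "linext \<iota>r c = rvec R p"
    using range_r by blast
  have "rvec R p j = 0" for j
proof -
    \<comment> \<open>pairing with \<open>l\<^bsub>e\<^sub>j\<^esub>\<close> reads off the \<open>j\<close>-th coordinate of \<open>r\<^sub>p\<close>\<close>
    obtain d where d: "linext \<iota>l d = lvec R (kd j)"
      using range_l by (metis rangeE rangeI)
    have "(\<Sum>b\<in>UNIV. \<Sum>h\<in>UNIV. c b * d h * P b h) = rvec R p j"
      unfolding rvec_def by (rule P_sigma[OF p d])
    moreover have "(\<Sum>b\<in>UNIV. \<Sum>h\<in>UNIV. c b * d h * P b h) = (\<Sum>h\<in>UNIV. d h * (\<Sum>b\<in>UNIV. c b * P b h))"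
      by (simp only: sum_distrib_left mult_ac) (rule sum.swap)
    ultimately show ?thesis
      by (simp add: c0)
  qed
  hence "linext \<iota>r c = (\<lambda>_. 0)"
    using p by auto
  thus "c = (\<lambda>_. 0)"
    using inj_r unfolding lin_inj_def by blast
qed

lemma lin_inj_transpose_P: "lin_inj (mat_transpose P)"
  unfolding lin_inj_def
proof (intro allI impI)
  fix d assume "linext (mat_transpose P) d = (\<lambda>_. 0)"
  hence d0: "\<And>b. (\<Sum>h\<in>UNIV. d h * P b h) = 0"
    unfolding linext_def mat_transpose_def by metis
  obtain q where q: "linext \<iota>l d = lvec R q"
    using range_l by blast
  have "lvec R q i = 0" for i
proof -
    obtain c where c: "linext \<iota>r c = rvec R (kd i)"
      using range_r by (metis rangeE rangeI)
    have "(\<Sum>b\<in>UNIV. \<Sum>h\<in>UNIV. c b * d h * P b h) = lvec R q i"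
      unfolding lvec_def by (rule P_sigma[OF c q])
    moreover have "(\<Sum>b\<in>UNIV. \<Sum>h\<in>UNIV. c b * d h * P b h) = (\<Sum>b\<in>UNIV. c b * (\<Sum>h\<in>UNIV. d h * P b h))"
      by (simp only: sum_distrib_left mult_ac)
    ultimately show ?thesis
      by (simp add: d0)
  qed
  hence "linext \<iota>l d = (\<lambda>_. 0)"
    using q by auto
  thus "d = (\<lambda>_. 0)"
    using inj_l unfolding lin_inj_def by blast
qed

lemma P_invertible:
  obtains N where "mat_mult P N = kd" and "mat_mult N P = kd"
  using mat_inverse_exists[OF lin_inj_P lin_inj_transpose_P] by blast

lemma conv_inverse_P: "conv_inverse Hr Hl P (\<lambda>b h. \<Sum>b'\<in>UNIV. hant Hr b b' * P b' h)"
  using Hr P_mult_left P_unit_left by (rule skew_pairing_conv_inverse)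
lemma alg_hom_P: "alg_hom Hr (hcop (hdual Hl)) P"
  unfolding alg_hom_def hcop_hdual_simps using P_mult_left P_unit_left by (simp add: mult_ac)

lemma coalg_hom_P: "coalg_hom Hr (hcop (hdual Hl)) P"
  unfolding coalg_hom_def hcop_hdual_simps
proof (intro conjI allI)
  fix a x y
  show "(\<Sum>z\<in>UNIV. P a z * hmul Hl y x z) = (\<Sum>c\<in>UNIV. \<Sum>d\<in>UNIV. hcom Hr a c d * P c x * P d y)"
    using P_mult_right[of y x a] by (simp add: mult_ac)
  show "(\<Sum>z\<in>UNIV. P a z * hone Hl z) = hcou Hr a" using P_unit_right[of a] by (simp add: mult_ac)
qed

lemma alg_hom_transpose_P: "alg_hom Hl (hop (hcop (hdual (hop Hr)))) (mat_transpose P)"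
  unfolding alg_hom_def hcop_hdual_simps hop_simps mat_transpose_def
proof (intro conjI allI)
  fix a b z
  have "(\<Sum>c\<in>UNIV. hmul Hl a b c * P z c) = (\<Sum>b1\<in>UNIV. \<Sum>b2\<in>UNIV. hcom Hr z b1 b2 * P b2 a * P b1 b)"
    by (rule P_mult_right)
  also have "\<dots> = (\<Sum>x\<in>UNIV. \<Sum>y\<in>UNIV. P x a * P y b * hcom Hr z y x)"
    by (subst sum.swap) (simp add: mult_ac)
  finally show "(\<Sum>c\<in>UNIV. hmul Hl a b c * P z c) = (\<Sum>x\<in>UNIV. \<Sum>y\<in>UNIV. P x a * P y b * hcom Hr z y x)" .
  show "(\<Sum>a\<in>UNIV. hone Hl a * P z a) = hcou Hr z" by (rule P_unit_right)
qed

lemma coalg_hom_transpose_P: "coalg_hom Hl (hcop (hdual (hop Hr))) (mat_transpose P)"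
  unfolding coalg_hom_def hcop_hdual_simps hop_simps mat_transpose_def
proof (intro conjI allI)
  fix a x y
  show "(\<Sum>z\<in>UNIV. P z a * hmul Hr x y z) = (\<Sum>c\<in>UNIV. \<Sum>d\<in>UNIV. hcom Hl a c d * P x c * P y d)"
    using P_mult_left[of x y a] by (simp add: mult_ac)
  show "(\<Sum>z\<in>UNIV. P z a * hone Hr z) = hcou Hl a" using P_unit_left[of a] by (simp add: mult_ac)
qed


lemma coalgebra_instances:
  "coalgebra Hr" "coalgebra Hl" "coalgebra (hop Hr)"
  "coalgebra (hcop (hdual Hl))" "coalgebra (hcop (hdual (hop Hr)))"
  using Hr Hl by (simp_all add: hopf_alg_coalgebra coalgebra_hop coalgebra_hcop_hdual hopf_alg_algebra algebra_hop)

lemma P_inverse_homs: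
  assumes "mat_mult P N = kd" and "mat_mult N P = kd"
  shows "alg_hom (hcop (hdual Hl)) Hr N" and "coalg_hom (hcop (hdual Hl)) Hr N"
    and "coalg_hom (hcop (hdual (hop Hr))) Hl (mat_transpose N)"
proof -
  show "alg_hom (hcop (hdual Hl)) Hr N"
    using alg_hom_P assms by (rule alg_hom_inverse)
  show "coalg_hom (hcop (hdual Hl)) Hr N"
    using coalg_hom_P assms by (rule coalg_hom_inverse)
  show "coalg_hom (hcop (hdual (hop Hr))) Hl (mat_transpose N)"
    using coalg_hom_transpose_P by (rule coalg_hom_inverse) (simp_all add: mat_mult_transpose assms)
qed

lemma gen_double_iso_drinfeld: "hopf_iso (gen_double Hr Hl P) (drinfeld Hl)"
proof -
  obtain N where PN: "mat_mult P N = kd" and NP: "mat_mult N P = kd"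
    by (rule P_invertible)
  obtain Q where Q: "conv_inverse Hr Hl P Q"
    using conv_inverse_P by blast
  \<comment> \<open>the evaluation pairing is the pullback of \<open>P\<close> along \<open>(N, id)\<close>\<close>
  have "conv_inverse (hcop (hdual Hl)) Hl (pair_pullback N kd P) (pair_pullback N kd Q)"
    using P_inverse_homs(2)[OF PN NP] coalg_hom_kd Q by (rule conv_inverse_pullback)
  hence "conv_inverse (hcop (hdual Hl)) Hl kd (pair_pullback N kd Q)"
    by (simp add: pair_pullback_kd_right NP)
  hence "hopf_hom (gen_double Hr Hl (pair_pullback P kd kd)) (drinfeld Hl) (mat_tensor P kd)"
    unfolding drinfeld_def
    by (intro gen_double_hom coalgebra_instances alg_hom_P alg_hom_kd coalg_hom_P coalg_hom_kd)
  hence "hopf_hom (gen_double Hr Hl P) (drinfeld Hl) (mat_tensor P kd)"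
    by (simp add: pair_pullback_kd_right)
  thus ?thesis
    by (rule hopf_isoI[where \<psi>="mat_tensor N kd"]) (simp_all add: mat_mult_tensor PN NP)
qed

lemma drinfeld_iso_op_drinfeld_op: "hopf_iso (drinfeld Hl) (hop (drinfeld (hop Hr)))"
proof -
  obtain N where PN: "mat_mult P N = kd" and NP: "mat_mult N P = kd"
    by (rule P_invertible)
  obtain Q where Q: "conv_inverse Hr Hl P Q"
    using conv_inverse_P by blast
  \<comment> \<open>the evaluation pairing is the pullback of \<open>P\<close> along \<open>(id, N\<^sup>T)\<close>\<close>
  have "coalg_hom (hop Hr) Hr kd"
    by (simp add: coalg_hom_kd)
  hence "conv_inverse (hop Hr) (hcop (hdual (hop Hr))) (pair_pullback kd (mat_transpose N) P)
      (pair_pullback kd (mat_transpose N) Q)"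
    using P_inverse_homs(3)[OF PN NP] Q by (rule conv_inverse_pullback)
  hence "conv_inverse (hop Hr) (hcop (hdual (hop Hr))) kd (pair_pullback kd (mat_transpose N) Q)"
    by (simp add: pair_pullback_kd_left PN)
  hence "conv_inverse (hcop (hdual (hop Hr))) (hop Hr) kd (mat_transpose (pair_pullback kd (mat_transpose N) Q))"
    using conv_inverse_transpose by fastforce
  hence "hopf_hom (gen_double (hcop (hdual Hl)) Hl (mat_transpose (pair_pullback (mat_transpose P) N kd)))
      (hop (drinfeld (hop Hr))) (mat_swap N (mat_transpose P))"
    unfolding drinfeld_def
    using P_inverse_homs[OF PN NP]
    by (intro gen_double_swap_hom coalgebra_instances alg_hom_transpose_P coalg_hom_transpose_P) simp_all
  hence "hopf_hom (drinfeld Hl) (hop (drinfeld (hop Hr))) (mat_swap N (mat_transpose P))"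
    by (simp add: drinfeld_def pair_pullback_of_kd mat_mult_transpose NP)
  thus ?thesis
    by (rule hopf_isoI[where \<psi>="mat_swap (mat_transpose N) P"])
      (simp_all add: mat_mult_transpose mat_mult_swap PN NP)
qed

end

theorem proposition3p3:
  fixes H :: "('i::finite, 'k::field) hopf" and R :: "'i \<Rightarrow> 'i \<Rightarrow> 'k"
    and Hr :: "('b::finite, 'k) hopf" and \<iota>r :: "'b \<Rightarrow> 'i \<Rightarrow> 'k"
    and Hl :: "('l::finite, 'k) hopf" and \<iota>l :: "'l \<Rightarrow> 'i \<Rightarrow> 'k"
    and P :: "'b \<Rightarrow> 'l \<Rightarrow> 'k"
  assumes "hopf_alg H" and "quasitriangular H R"
    and "hopf_alg Hr" and "hopf_hom Hr (hdual (hdual H)) \<iota>r" and "lin_inj \<iota>r"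
    and "range (linext \<iota>r) = range (rvec R)"
    and "hopf_alg Hl" and "hopf_hom Hl (hdual (hdual H)) \<iota>l" and "lin_inj \<iota>l"
    and "range (linext \<iota>l) = range (lvec R)"
    and "\<forall>c d p q. linext \<iota>r c = rvec R p \<longrightarrow> linext \<iota>l d = lvec R q \<longrightarrow>
           (\<Sum>b\<in>UNIV. \<Sum>h\<in>UNIV. c b * d h * P b h) = sigma R p q"
  shows "hopf_iso (gen_double Hr Hl P) (drinfeld Hl) \<and>
         hopf_iso (drinfeld Hl) (hop (drinfeld (hop Hr)))"
proof -
  interpret sigma_pairing H R Hr \<iota>r Hl \<iota>l P
    by (rule sigma_pairing.intro) (rule assms)+
  show ?thesis
    using gen_double_iso_drinfeld drinfeld_iso_op_drinfeld_op ..
qed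

end
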